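(* Let $N\ge2$ and $d_1,\dots,d_N\ge2$, and set $D=d_1\cdots d_N$, $B=\sum_{i_1,\dots,i_N\in\{0,1\}}d_1^{i_1}\cdots d_N^{i_N}$, and $C=\sum_{A|B'}(d_A+d_{B'})$. Then the Haar averages of the entangling power satisfy $$\langle\varepsilon_\tau\rangle_{O(D)}=2\left[1-\Big(\prod_{i=1}^N\frac{1}{d_i+1}\Big)\frac{2^N(D+1)-2B+\frac{BD-2^N}{2^{N-1}-1}C}{(D-1)(D+2)}\right]$$ and $$\langle\varepsilon_\tau\rangle_{U(D)}=2\left[1-\Big(\prod_{i=1}^N\frac{1}{d_i+1}\Big)\frac{BC}{(2^{N-1}-1)(D+1)}\right].$$
   Context: Consider $\mathcal{H}=\mathbb{C}^{d_1}\otimes\cdots\otimes\mathbb{C}^{d_N}$. The sum $\sum_{A|B'}$ runs over all $2^{N-1}-1$ unordered bipartitions of $\{1,\dots,N\}$ into disjoint nonempty sets $A,B'$, and $d_A=\prod_{i\in A}d_i$. For a pure state $|\psi\rangle$, $\tau_{A|B'}(|\psi\rangle)=2\big(1-\mathrm{Tr}(\mathrm{Tr}_{B'}|\psi\rangle\langle\psi|)^2\big)$, and the one-tangle is $\tau_1=\frac{1}{2^{N-1}-1}\sum_{A|B'}\tau_{A|B'}$. The entangling power of a unitary $U$ on $\mathcal{H}$ is $\varepsilon_\tau(U)=\langle\tau_1(U|\psi_1\rangle\cdots|\psi_N\rangle)\rangle$, averaged over product states with each $|\psi_i\rangle$ drawn independently from the uniform measure on the unit sphere of $\mathbb{C}^{d_i}$.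 $\langle\cdot\rangle_{O(D)}$ and $\langle\cdot\rangle_{U(D)}$ denote averages over the Haar measure on the orthogonal and unitary group of size $D$. *)

theory Defs
  imports "HOL-Probability.Probability"
begin

definition mats :: "'i set \<Rightarrow> ('i \<Rightarrow> 'i \<Rightarrow> 'a) set" where
  "mats I = PiE I (\<lambda>_. PiE I (\<lambda>_. UNIV))"

definition mat_space :: "'i set \<Rightarrow> ('i \<Rightarrow> 'i \<Rightarrow> 'a::topological_space) measure" where
  "mat_space I = PiM I (\<lambda>_. PiM I (\<lambda>_. borel))"

definition vec_space :: "'i set \<Rightarrow> ('i \<Rightarrow> 'a::topological_space) measure" where
  "vec_space I = PiM I (\<lambda>_. borel)"

definition matmul :: "'i set \<Rightarrow> ('i \<Rightarrow> 'i \<Rightarrow> 'a::comm_semiring_1) \<Rightarrow> ('i \<Rightarrow> 'i \<Rightarrow> 'a) \<Rightarrow> ('i \<Rightarrow> 'i \<Rightarrow> 'a)" where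
  "matmul I U V = (\<lambda>i\<in>I. \<lambda>j\<in>I. \<Sum>k\<in>I. U i k * V k j)"

definition matvec :: "'i set \<Rightarrow> ('i \<Rightarrow> 'i \<Rightarrow> 'a::comm_semiring_1) \<Rightarrow> ('i \<Rightarrow> 'a) \<Rightarrow> ('i \<Rightarrow> 'a)" where
  "matvec I U x = (\<lambda>i\<in>I. \<Sum>j\<in>I. U i j * x j)"

definition unitary_group :: "'i set \<Rightarrow> ('i \<Rightarrow> 'i \<Rightarrow> complex) set" where
  "unitary_group I = {U \<in> mats I. \<forall>i\<in>I. \<forall>j\<in>I.
      (\<Sum>k\<in>I. cnj (U k i) * U k j) = (if i = j then 1 else 0)}"

definition orthogonal_group :: "'i set \<Rightarrow> ('i \<Rightarrow> 'i \<Rightarrow> real) set" where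
  "orthogonal_group I = {U \<in> mats I. \<forall>i\<in>I. \<forall>j\<in>I.
      (\<Sum>k\<in>I. U k i * U k j) = (if i = j then 1 else 0)}"

definition haar_unitary :: "'i set \<Rightarrow> ('i \<Rightarrow> 'i \<Rightarrow> complex) measure \<Rightarrow> bool" where
  "haar_unitary I \<mu> \<longleftrightarrow> prob_space \<mu> \<and> sets \<mu> = sets (mat_space I) \<and>
     emeasure \<mu> (unitary_group I) = 1 \<and>
     (\<forall>V\<in>unitary_group I. distr \<mu> (mat_space I) (matmul I V) = \<mu>)"

definition haar_orthogonal :: "'i set \<Rightarrow> ('i \<Rightarrow> 'i \<Rightarrow> real) measure \<Rightarrow> bool" where
  "haar_orthogonal I \<mu> \<longleftrightarrow> prob_space \<mu> \<and> sets \<mu> = sets (mat_space I) \<and>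
     emeasure \<mu> (orthogonal_group I) = 1 \<and>
     (\<forall>V\<in>orthogonal_group I. distr \<mu> (mat_space I) (matmul I V) = \<mu>)"

definition unit_sphere_on :: "'i set \<Rightarrow> ('i \<Rightarrow> complex) set" where
  "unit_sphere_on I = {x \<in> PiE I (\<lambda>_. UNIV). (\<Sum>i\<in>I. (cmod (x i))\<^sup>2) = 1}"

definition uniform_sphere :: "'i set \<Rightarrow> ('i \<Rightarrow> complex) measure \<Rightarrow> bool" where
  "uniform_sphere I \<sigma> \<longleftrightarrow> prob_space \<sigma> \<and> sets \<sigma> = sets (vec_space I) \<and>
     emeasure \<sigma> (unit_sphere_on I) = 1 \<and>
     (\<forall>V\<in>unitary_group I. distr \<sigma> (vec_space I) (matvec I V) = \<sigma>)"

text \<open>Basis vectors are indexed by multi-indices x with x i < d i for i < N.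
  Sites are numbered 0..N-1.\<close>

definition sub_idx :: "(nat \<Rightarrow> nat) \<Rightarrow> nat set \<Rightarrow> (nat \<Rightarrow> nat) set" where
  "sub_idx d A = PiE A (\<lambda>i. {..<d i})"

definition basis_idx :: "nat \<Rightarrow> (nat \<Rightarrow> nat) \<Rightarrow> (nat \<Rightarrow> nat) set" where
  "basis_idx N d = sub_idx d {..<N}"

definition merge_idx :: "nat set \<Rightarrow> (nat \<Rightarrow> nat) \<Rightarrow> (nat \<Rightarrow> nat) \<Rightarrow> (nat \<Rightarrow> nat)" where
  "merge_idx A a b = (\<lambda>i. if i \<in> A then a i else b i)"

text \<open>Reduced density matrix Tr_{B'} |phi><phi| on the subsystem A (B' = complement).\<close>

definition rdm :: "nat \<Rightarrow> (nat \<Rightarrow> nat) \<Rightarrow> nat set \<Rightarrow> ((nat \<Rightarrow> nat) \<Rightarrow> complex)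
                    \<Rightarrow> (nat \<Rightarrow> nat) \<Rightarrow> (nat \<Rightarrow> nat) \<Rightarrow> complex" where
  "rdm N d A \<phi> a a' = (\<Sum>b\<in>sub_idx d ({..<N} - A).
       \<phi> (merge_idx A a b) * cnj (\<phi> (merge_idx A a' b)))"

definition purity :: "nat \<Rightarrow> (nat \<Rightarrow> nat) \<Rightarrow> nat set \<Rightarrow> ((nat \<Rightarrow> nat) \<Rightarrow> complex) \<Rightarrow> real" where
  "purity N d A \<phi> = Re (\<Sum>a\<in>sub_idx d A. \<Sum>a'\<in>sub_idx d A. rdm N d A \<phi> a a' * rdm N d A \<phi> a' a)"

definition tau_bip :: "nat \<Rightarrow> (nat \<Rightarrow> nat) \<Rightarrow> nat set \<Rightarrow> ((nat \<Rightarrow> nat) \<Rightarrow> complex) \<Rightarrow> real" where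
  "tau_bip N d A \<phi> = 2 * (1 - purity N d A \<phi>)"

text \<open>Unordered bipartitions A|B' of {0..N-1}: each represented once by the part containing 0.\<close>

definition bipartitions :: "nat \<Rightarrow> nat set set" where
  "bipartitions N = {A. A \<subseteq> {..<N} \<and> 0 \<in> A \<and> A \<noteq> {..<N}}"

definition one_tangle :: "nat \<Rightarrow> (nat \<Rightarrow> nat) \<Rightarrow> ((nat \<Rightarrow> nat) \<Rightarrow> complex) \<Rightarrow> real" where
  "one_tangle N d \<phi> = (1 / ((2::real) ^ (N - 1) - 1)) * (\<Sum>A\<in>bipartitions N. tau_bip N d A \<phi>)"

definition product_state :: "nat \<Rightarrow> (nat \<Rightarrow> nat \<Rightarrow> complex) \<Rightarrow> ((nat \<Rightarrow> nat) \<Rightarrow> complex)" where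
  "product_state N \<psi> = (\<lambda>x. \<Prod>i<N. \<psi> i (x i))"

definition entangling_power :: "nat \<Rightarrow> (nat \<Rightarrow> nat) \<Rightarrow> (nat \<Rightarrow> (nat \<Rightarrow> complex) measure)
     \<Rightarrow> ((nat \<Rightarrow> nat) \<Rightarrow> (nat \<Rightarrow> nat) \<Rightarrow> complex) \<Rightarrow> real" where
  "entangling_power N d \<sigma> U =
     (\<integral>\<psi>. one_tangle N d (matvec (basis_idx N d) U (product_state N \<psi>)) \<partial>(PiM {..<N} \<sigma>))"

end

theory Submission
  imports Defs "HOL-Combinatorics.Transposition"
begin

text \<open>
  If the law of a random vector x in C^D is invariant under coordinate reflections, coordinate
  permutations and rotations in coordinate planes, its fourth moments E[x_i x_j^* x_k x_l^*] are
  determined by three numbers: the diagonal moment b (i = j = k = l), the pair moment a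
  (i = j, k = l or i = l, j = k) and the cross moment c (i = k, j = l).  A 45 degree rotation gives
  b = 2a + c, the normalization gives D (b + (D - 1) a) = 1, and summing the cross moments gives
  D (b + (D - 1) c) = E |sum_i x_i^2|^2.  For U phi with U Haar unitary (and for a uniformly random
  unit vector) phase invariance gives c = 0, hence a = 1 / (D (D + 1)); for Q phi with Q Haar
  orthogonal, |sum_i x_i^2|^2 = t := |sum_i phi_i^2|^2 is constant.

  The purity of each bipartition is a sum of fourth moments; with the moments above it averages to
  (d_A + d_B) / (D + 1) in the unitary case and to an affine function of t in the orthogonal case.
  For product states t factorizes over the sites, with average 2 / (d_i + 1) on each, and the two
  averages may be exchanged since the integrand is a finite sum of products of integrable functions.
\<close>

section \<open>Fourth moments of invariant random vectors\<close>

definition quartic :: "('i \<Rightarrow> complex) \<Rightarrow> 'i \<Rightarrow> 'i \<Rightarrow> 'i \<Rightarrow> 'i \<Rightarrow> complex" where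
  "quartic w i j k l = w i * cnj (w j) * w k * cnj (w l)"

definition conj_overlap :: "'i set \<Rightarrow> ('i \<Rightarrow> complex) \<Rightarrow> complex" where
  "conj_overlap I w = (\<Sum>i\<in>I. (w i)\<^sup>2) * cnj (\<Sum>i\<in>I. (w i)\<^sup>2)"

definition of_real_mat :: "'i set \<Rightarrow> ('i \<Rightarrow> 'i \<Rightarrow> real) \<Rightarrow> 'i \<Rightarrow> 'i \<Rightarrow> complex" where
  "of_real_mat I Q = (\<lambda>x\<in>I. \<lambda>y\<in>I. complex_of_real (Q x y))"

definition phase_mat :: "'i set \<Rightarrow> 'i \<Rightarrow> 'i \<Rightarrow> 'i \<Rightarrow> complex" where
  "phase_mat I p = (\<lambda>x\<in>I. \<lambda>y\<in>I. if x = y then (if x = p then \<i> else 1) else 0)"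

lemma sum_if_eq_const:
  assumes "finite S" "x \<in> S"
  shows "(\<Sum>y\<in>S. if x = y then P else Q) = P + of_nat (card S - 1) * (Q::'a::comm_ring_1)"
proof -
  have "(\<Sum>y\<in>S. if x = y then P else Q) = P + (\<Sum>y\<in>S-{x}. if x = y then P else Q)"
    using assms by (simp add: sum.remove)
  also have "(\<Sum>y\<in>S-{x}. if x = y then P else Q) = (\<Sum>y\<in>S-{x}. Q)"
    by (rule sum.cong) auto
  finally show ?thesis using assms by (simp add: card_Diff_singleton mult.commute)
qed

lemma sum_sum_if_eq_const:
  assumes "finite S" "\<And>i k. i \<in> S \<Longrightarrow> k \<in> S \<Longrightarrow> F i k = (if i = k then P else Q)"
  shows "(\<Sum>i\<in>S. \<Sum>k\<in>S. F i k) = of_nat (card S) * (P + of_nat (card S - 1) * (Q::'a::comm_ring_1))"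
  using assms by (simp add: sum_if_eq_const cong: sum.cong)

lemma conj_overlap_eq_sum_quartic: "conj_overlap I w = (\<Sum>i\<in>I. \<Sum>k\<in>I. quartic w i k i k)"
  by (simp add: quartic_def conj_overlap_def sum_product power2_eq_square ac_simps)

lemma borel_measurable_cnj [measurable]:
  "f \<in> borel_measurable M \<Longrightarrow> (\<lambda>x. cnj (f x :: complex)) \<in> borel_measurable M"
  by (rule borel_measurable_continuous_on[where f=cnj]) (auto intro: continuous_on_cnj)

lemma quartic_measurable:
  assumes "\<And>i. i \<in> I \<Longrightarrow> (\<lambda>x. X x i) \<in> borel_measurable M" "i \<in> I" "j \<in> I" "k \<in> I" "l \<in> I"
  shows "(\<lambda>x. quartic (X x) i j k l) \<in> borel_measurable M"
  unfolding quartic_def using assms by measurable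

lemma quartic_cong:
  "i \<in> I \<Longrightarrow> j \<in> I \<Longrightarrow> k \<in> I \<Longrightarrow> l \<in> I \<Longrightarrow> (\<And>x. x \<in> I \<Longrightarrow> w x = w' x) \<Longrightarrow>
   quartic w i j k l = quartic w' i j k l"
  by (simp add: quartic_def)

lemma norm_le_1_of_sum_norm2_eq_1:
  fixes f :: "'a \<Rightarrow> 'b::real_normed_vector"
  assumes "finite S" "(\<Sum>x\<in>S. (norm (f x))\<^sup>2) = 1" "x \<in> S"
  shows "norm (f x) \<le> 1"
proof -
  have "(norm (f x))\<^sup>2 \<le> (\<Sum>x\<in>S. (norm (f x))\<^sup>2)" by (rule member_le_sum) (use assms in auto)
  then show ?thesis using assms by (simp add: power_le_one_iff)
qed

lemma integrable_quartic_unit_vector: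
  assumes "prob_space M" "finite I" "\<And>i. i \<in> I \<Longrightarrow> (\<lambda>\<omega>. X \<omega> i) \<in> borel_measurable M"
    and "AE \<omega> in M. (\<Sum>i\<in>I. (cmod (X \<omega> i))\<^sup>2) = 1"
    and "i\<in>I" "j\<in>I" "k\<in>I" "l\<in>I"
  shows "integrable M (\<lambda>\<omega>. quartic (X \<omega>) i j k l)"
proof -
  interpret prob_space M by fact
  show ?thesis
  proof (rule integrable_const_bound[where B=1])
    show "AE \<omega> in M. norm (quartic (X \<omega>) i j k l) \<le> 1"
      using assms(4)
    proof eventually_elim
      case (elim \<omega>)
      then have "cmod (X \<omega> x) \<le> 1" if "x \<in> I" for x
        using norm_le_1_of_sum_norm2_eq_1[OF assms(2) _ that, where f="X \<omega>"] by simp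
      then show ?case using assms(5-) by (simp add: quartic_def norm_mult mult_le_one)
    qed
  qed (rule quartic_measurable[OF assms(3) assms(5-)])
qed

definition flip_sign :: "'i \<Rightarrow> 'i \<Rightarrow> complex" where
  "flip_sign p x = (if x = p then -1 else 1)"

lemma flip_sign_odd_index_exists:
  assumes "\<not> (i = j \<and> k = l)" "\<not> (i = l \<and> j = k)" "\<not> (i = k \<and> j = l)"
  shows "\<exists>p\<in>{i, j, k, l}. flip_sign p i * flip_sign p j * flip_sign p k * flip_sign p l = -1"
  using assms unfolding flip_sign_def
  by (cases "i = j"; cases "i = k"; cases "i = l"; cases "j = k"; cases "j = l"; cases "k = l"; simp)

definition moment_pattern :: "'a::zero \<Rightarrow> 'a \<Rightarrow> 'a \<Rightarrow> 'j \<Rightarrow> 'j \<Rightarrow> 'j \<Rightarrow> 'j \<Rightarrow> 'a" where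
  "moment_pattern b a c i j k l =
     (if i = j \<and> j = k \<and> k = l then b else if i = j \<and> k = l then a
      else if i = l \<and> j = k then a else if i = k \<and> j = l then c else 0)"

lemma moment_pattern_eq_0:
  assumes "\<not> (i = j \<and> k = l)" "\<not> (i = l \<and> j = k)" "\<not> (i = k \<and> j = l)"
  shows "moment_pattern b a c i j k l = 0"
proof -
  have "\<not> (i = j \<and> j = k \<and> k = l)" using assms(1) by blast
  then show ?thesis using assms unfolding moment_pattern_def by (simp only: if_False)
qed

locale orth_invariant_vector = prob_space M for M :: "'m measure" +
  fixes I :: "'i set" and X :: "'m \<Rightarrow> 'i \<Rightarrow> complex"
  assumes finite_I: "finite I" and card_I: "card I \<ge> 2"
    and measurable_X: "\<And>i. i \<in> I \<Longrightarrow> (\<lambda>\<omega>. X \<omega> i) \<in> borel_measurable M"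
    and unit_X: "AE \<omega> in M. (\<Sum>i\<in>I. (cmod (X \<omega> i))\<^sup>2) = 1"
    and orth_invariant: "\<And>Q i j k l. Q \<in> orthogonal_group I \<Longrightarrow> i\<in>I \<Longrightarrow> j\<in>I \<Longrightarrow> k\<in>I \<Longrightarrow> l\<in>I \<Longrightarrow>
      (\<integral>\<omega>. quartic (matvec I (of_real_mat I Q) (X \<omega>)) i j k l \<partial>M) = (\<integral>\<omega>. quartic (X \<omega>) i j k l \<partial>M)"
begin

definition moment :: "'i \<Rightarrow> 'i \<Rightarrow> 'i \<Rightarrow> 'i \<Rightarrow> complex" where
  "moment i j k l = (\<integral>\<omega>. quartic (X \<omega>) i j k l \<partial>M)"

lemma integrable_quartic:
  assumes "i\<in>I" "j\<in>I" "k\<in>I" "l\<in>I"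
  shows "integrable M (\<lambda>\<omega>. quartic (X \<omega>) i j k l)"
  by (rule integrable_quartic_unit_vector[OF prob_space_axioms finite_I measurable_X unit_X assms])

lemma moment_transform:
  assumes "Q \<in> orthogonal_group I" "i\<in>I" "j\<in>I" "k\<in>I" "l\<in>I"
    and "\<And>w. quartic (matvec I (of_real_mat I Q) w) i j k l = f w"
  shows "moment i j k l = (\<integral>\<omega>. f (X \<omega>) \<partial>M)"
  using orth_invariant[OF assms(1-5)] assms(6) unfolding moment_def by simp

definition reflection_mat :: "'i \<Rightarrow> 'i \<Rightarrow> 'i \<Rightarrow> real" where
  "reflection_mat p = (\<lambda>x\<in>I. \<lambda>y\<in>I. if x = y then (if x = p then -1 else 1) else 0)"

lemma reflection_mat_orthogonal: "reflection_mat p \<in> orthogonal_group I"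
  unfolding orthogonal_group_def mats_def reflection_mat_def
  by (auto simp: if_distrib[of "\<lambda>x. x * _"] finite_I cong: if_cong)

lemma matvec_reflection_mat:
  "i \<in> I \<Longrightarrow> matvec I (of_real_mat I (reflection_mat p)) w i = (if i = p then - w i else w i)"
  unfolding matvec_def of_real_mat_def reflection_mat_def
  by (auto simp: if_distrib[of "\<lambda>x. x * _"] if_distrib[of complex_of_real] finite_I
           cong: if_cong)

lemma moment_eq_0_if_odd:
  assumes "p \<in> I" "i\<in>I" "j\<in>I" "k\<in>I" "l\<in>I"
    and "flip_sign p i * flip_sign p j * flip_sign p k * flip_sign p l = -1"
  shows "moment i j k l = 0"
proof -
  let ?s = "flip_sign p i * flip_sign p j * flip_sign p k * flip_sign p l"
  have "quartic (matvec I (of_real_mat I (reflection_mat p)) w) i j k l = ?s * quartic w i j k l" for w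
    using assms(2-5) by (auto simp: quartic_def matvec_reflection_mat flip_sign_def)
  then have "moment i j k l = (\<integral>\<omega>. ?s * quartic (X \<omega>) i j k l \<partial>M)"
    by (rule moment_transform[OF reflection_mat_orthogonal[of p] assms(2-5)])
  then show ?thesis using assms(6) unfolding moment_def by simp
qed

definition swap_mat :: "'i \<Rightarrow> 'i \<Rightarrow> 'i \<Rightarrow> 'i \<Rightarrow> real" where
  "swap_mat p q = (\<lambda>x\<in>I. \<lambda>y\<in>I. if y = Transposition.transpose p q x then 1 else 0)"

lemma swap_mat_orthogonal:
  assumes "p \<in> I" "q \<in> I"
  shows "swap_mat p q \<in> orthogonal_group I"
proof -
  have "(if i = Transposition.transpose p q k then 1 else 0) * (if j = Transposition.transpose p q k then 1 else 0)
      = (if k = Transposition.transpose p q i then (if i = j then 1 else 0) else (0::real))" for i j k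
    by (auto simp: Transposition.transpose_def)
  moreover have "x \<in> I \<Longrightarrow> Transposition.transpose p q x \<in> I" for x
    using assms by (simp add: Transposition.transpose_def)
  ultimately show ?thesis using assms unfolding orthogonal_group_def mats_def swap_mat_def
    by (auto simp: finite_I cong: if_cong)
qed

lemma moment_swap:
  assumes "p \<in> I" "q \<in> I" "i\<in>I" "j\<in>I" "k\<in>I" "l\<in>I"
  defines "\<tau> \<equiv> Transposition.transpose p q"
  shows "moment (\<tau> i) (\<tau> j) (\<tau> k) (\<tau> l) = moment i j k l"
proof -
  have "matvec I (of_real_mat I (swap_mat p q)) w x = w (\<tau> x)" if "x \<in> I" for w x
  proof -
    have "\<tau> x \<in> I" using assms that by (simp add: Transposition.transpose_def)
    then show ?thesis
      unfolding matvec_def of_real_mat_def swap_mat_def \<tau>_def using that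
      by (auto simp: if_distrib[of "\<lambda>x. x * _"] if_distrib[of complex_of_real] finite_I
               cong: if_cong)
  qed
  then have "moment i j k l = (\<integral>\<omega>. quartic (X \<omega>) (\<tau> i) (\<tau> j) (\<tau> k) (\<tau> l) \<partial>M)"
    by (intro moment_transform[OF swap_mat_orthogonal[OF assms(1,2)] assms(3-6)])
       (simp add: quartic_def assms)
  then show ?thesis unfolding moment_def by simp
qed

definition p0 :: 'i where "p0 = (SOME p. p \<in> I)"
definition q0 :: 'i where "q0 = (SOME q. q \<in> I \<and> q \<noteq> p0)"

lemma p0_q0: "p0 \<in> I" "q0 \<in> I" "q0 \<noteq> p0"
proof -
  have "I \<noteq> {}" using card_I by auto
  then show p0: "p0 \<in> I" unfolding p0_def by (simp add: some_in_eq)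
  have "card (I - {p0}) \<ge> 1" using card_I p0 finite_I by (simp add: card_Diff_singleton)
  then have "\<exists>q. q \<in> I \<and> q \<noteq> p0" by (metis Diff_iff card.empty ex_in_conv insertI1 not_one_le_zero)
  then have "q0 \<in> I \<and> q0 \<noteq> p0" unfolding q0_def by (rule someI_ex)
  then show "q0 \<in> I" "q0 \<noteq> p0" by auto
qed

definition diag_moment :: complex where "diag_moment = moment p0 p0 p0 p0"
definition pair_moment :: complex where "pair_moment = moment p0 p0 q0 q0"
definition cross_moment :: complex where "cross_moment = moment p0 q0 p0 q0"

lemma moment_pppp: "p \<in> I \<Longrightarrow> moment p p p p = diag_moment"
  using moment_swap[of p p0 p p p p] p0_q0 unfolding diag_moment_def
  by (simp add: Transposition.transpose_def)

lemma moment_relabel_pair: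
  assumes "p \<in> I" "q \<in> I" "p \<noteq> q" "i \<in> {p, q}" "j \<in> {p, q}" "k \<in> {p, q}" "l \<in> {p, q}"
  defines "\<rho> \<equiv> \<lambda>x. if x = p then p0 else q0"
  shows "moment i j k l = moment (\<rho> i) (\<rho> j) (\<rho> k) (\<rho> l)"
proof -
  define \<tau> where "\<tau> = Transposition.transpose p p0"
  define \<tau>' where "\<tau>' = Transposition.transpose (\<tau> q) q0"
  have \<tau>: "x \<in> {p, q} \<Longrightarrow> \<tau> x \<in> I" "x \<in> {p, q} \<Longrightarrow> \<tau>' (\<tau> x) = \<rho> x" for x
    using assms(1-3) p0_q0 unfolding \<tau>_def \<tau>'_def \<rho>_def Transposition.transpose_def by auto
  have "moment i j k l = moment (\<tau> i) (\<tau> j) (\<tau> k) (\<tau> l)"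
    using moment_swap[of p p0 i j k l] assms p0_q0 unfolding \<tau>_def by auto
  also have "\<dots> = moment (\<tau>' (\<tau> i)) (\<tau>' (\<tau> j)) (\<tau>' (\<tau> k)) (\<tau>' (\<tau> l))"
    using moment_swap[of "\<tau> q" q0] \<tau>(1) assms(4-7) p0_q0 unfolding \<tau>'_def by auto
  finally show ?thesis using \<tau>(2) assms(4-7) by simp
qed

lemma moment_ppqq: "p \<in> I \<Longrightarrow> q \<in> I \<Longrightarrow> p \<noteq> q \<Longrightarrow> moment p p q q = pair_moment"
  using moment_relabel_pair[of p q p p q q] unfolding pair_moment_def by simp

lemma moment_pqpq: "p \<in> I \<Longrightarrow> q \<in> I \<Longrightarrow> p \<noteq> q \<Longrightarrow> moment p q p q = cross_moment"
  using moment_relabel_pair[of p q p q p q] unfolding cross_moment_def by simp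

lemma moment_eq_pattern:
  assumes "i\<in>I" "j\<in>I" "k\<in>I" "l\<in>I"
  shows "moment i j k l = moment_pattern diag_moment pair_moment cross_moment i j k l"
proof -
  consider "i = j \<and> j = k \<and> k = l" | "\<not> (i = j \<and> j = k \<and> k = l)" "i = j \<and> k = l"
    | "\<not> (i = j \<and> k = l)" "i = l \<and> j = k" | "\<not> (i = j \<and> k = l)" "\<not> (i = l \<and> j = k)" "i = k \<and> j = l"
    | "\<not> (i = j \<and> k = l)" "\<not> (i = l \<and> j = k)" "\<not> (i = k \<and> j = l)"
    by blast
  then show ?thesis
  proof cases
    case 1
    then show ?thesis using moment_pppp assms by (simp add: moment_pattern_def)
  next
    case 2
    then show ?thesis using moment_ppqq assms by (simp add: moment_pattern_def)
  next
    case 3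
    then have ij: "l = i" "k = j" "i \<noteq> j" by auto
    have "quartic w i j j i = quartic w i i j j" for w
      unfolding quartic_def by (simp only: ac_simps)
    then have "moment i j k l = pair_moment"
      using moment_ppqq[of i j] assms ij unfolding moment_def by simp
    then show ?thesis using 3 by (simp add: moment_pattern_def)
  next
    case 4
    then show ?thesis using moment_pqpq assms by (auto simp: moment_pattern_def)
  next
    case 5
    from flip_sign_odd_index_exists[OF 5] obtain p where p: "p \<in> {i, j, k, l}"
      and odd: "flip_sign p i * flip_sign p j * flip_sign p k * flip_sign p l = -1"
      by blast
    from p assms have "p \<in> I" by blast
    then have "moment i j k l = 0" by (rule moment_eq_0_if_odd[OF _ assms odd])
    then show ?thesis using moment_pattern_eq_0[OF 5] by simp
  qed
qed

definition rotation_mat :: "'i \<Rightarrow> 'i \<Rightarrow> 'i \<Rightarrow> 'i \<Rightarrow> real" where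
  "rotation_mat p q = (\<lambda>x\<in>I. \<lambda>y\<in>I.
     if x \<in> {p, q} \<and> y \<in> {p, q} then (if x = q \<and> y = q then - sqrt (1/2) else sqrt (1/2))
     else if x = y then 1 else 0)"

lemma sum_split_pair:
  assumes "p \<in> I" "q \<in> I" "p \<noteq> q"
  shows "(\<Sum>k\<in>I. f k) = f p + f q + (\<Sum>k\<in>I - {p, q}. f k)"
proof -
  have "(\<Sum>k\<in>I. f k) = (\<Sum>k\<in>{p, q}. f k) + (\<Sum>k\<in>I - {p, q}. f k)"
    using assms finite_I by (subst sum.subset_diff[of "{p, q}"]) (auto simp: ac_simps)
  then show ?thesis using assms by simp
qed

lemma rotation_mat_orthogonal:
  assumes "p \<in> I" "q \<in> I" "p \<noteq> q"
  shows "rotation_mat p q \<in> orthogonal_group I"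
  unfolding orthogonal_group_def mats_def
proof (intro CollectI conjI ballI)
  show "rotation_mat p q \<in> (I \<rightarrow>\<^sub>E I \<rightarrow>\<^sub>E UNIV)" unfolding rotation_mat_def by auto
  fix i j assume ij: "i \<in> I" "j \<in> I"
  have rest: "(\<Sum>k\<in>I - {p, q}. rotation_mat p q k i * rotation_mat p q k j)
      = (\<Sum>k\<in>I - {p, q}. if k = i then (if i = j then 1 else 0) else 0)"
    by (rule sum.cong) (auto simp: rotation_mat_def ij)
  have "(\<Sum>k\<in>I. rotation_mat p q k i * rotation_mat p q k j)
      = rotation_mat p q p i * rotation_mat p q p j + rotation_mat p q q i * rotation_mat p q q j
        + (\<Sum>k\<in>I - {p, q}. if k = i then (if i = j then 1 else 0) else 0)"
    by (subst sum_split_pair[OF assms]) (simp only: rest)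
  also have "\<dots> = (if i = j then 1 else 0)"
    using assms ij finite_I by (auto simp: rotation_mat_def)
  finally show "(\<Sum>k\<in>I. rotation_mat p q k i * rotation_mat p q k j) = (if i = j then 1 else 0)" .
qed

lemma matvec_rotation_mat:
  assumes "p \<in> I" "q \<in> I" "p \<noteq> q"
  shows "matvec I (of_real_mat I (rotation_mat p q)) w p = complex_of_real (sqrt (1/2)) * (w p + w q)"
proof -
  have "(\<Sum>k\<in>I - {p, q}. of_real_mat I (rotation_mat p q) p k * w k) = 0"
    by (rule sum.neutral) (auto simp: rotation_mat_def of_real_mat_def assms)
  then show ?thesis
    unfolding matvec_def using assms sum_split_pair[OF assms, of "\<lambda>k. of_real_mat I (rotation_mat p q) p k * w k"]
    by (simp add: rotation_mat_def of_real_mat_def algebra_simps)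
qed

text \<open>Rotating by 45 degrees in the plane of p0 and q0 spreads the diagonal moment over all sixteen
  moments indexed by p0 and q0.\<close>

lemma diag_moment_eq: "diag_moment = 2 * pair_moment + cross_moment"
proof -
  note pq = p0_q0(1,2) p0_q0(3)[symmetric]
  let ?S = "{p0, q0}"
  have "quartic (matvec I (of_real_mat I (rotation_mat p0 q0)) w) p0 p0 p0 p0
      = 1/4 * (\<Sum>i\<in>?S. \<Sum>j\<in>?S. \<Sum>k\<in>?S. \<Sum>l\<in>?S. quartic w i j k l)" for w
  proof -
    let ?c = "complex_of_real (sqrt (1/2))"
    have c: "?c * ?c = 1/2"
      by (simp flip: of_real_mult add: real_sqrt_mult[symmetric])
    have "quartic (matvec I (of_real_mat I (rotation_mat p0 q0)) w) p0 p0 p0 p0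
        = (?c * ?c) * (?c * ?c) * ((w p0 + w q0) * cnj (w p0 + w q0) * (w p0 + w q0) * cnj (w p0 + w q0))"
      by (simp add: matvec_rotation_mat[OF pq] quartic_def)
    also have "\<dots> = 1/4 * ((w p0 + w q0) * cnj (w p0 + w q0) * (w p0 + w q0) * cnj (w p0 + w q0))"
      by (simp add: c)
    also have "\<dots> = 1/4 * (\<Sum>i\<in>?S. \<Sum>j\<in>?S. \<Sum>k\<in>?S. \<Sum>l\<in>?S. quartic w i j k l)"
      using p0_q0(3) by (simp add: quartic_def algebra_simps)
    finally show ?thesis .
  qed
  then have "diag_moment = (\<integral>\<omega>. 1/4 * (\<Sum>i\<in>?S. \<Sum>j\<in>?S. \<Sum>k\<in>?S. \<Sum>l\<in>?S. quartic (X \<omega>) i j k l) \<partial>M)"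
    unfolding diag_moment_def by (rule moment_transform[OF rotation_mat_orthogonal[OF pq] pq(1,1,1,1)])
  also have "\<dots> = 1/4 * (\<Sum>i\<in>?S. \<Sum>j\<in>?S. \<Sum>k\<in>?S. \<Sum>l\<in>?S. moment i j k l)"
    unfolding moment_def using pq by (simp add: integrable_quartic integrable_sum)
  also have "\<dots> = 1/4 * (2 * diag_moment + 4 * pair_moment + 2 * cross_moment)"
    using pq by (simp add: moment_eq_pattern moment_pattern_def)
  finally show ?thesis by algebra
qed

lemma sum_moment_iikk:
  "(\<Sum>i\<in>I. \<Sum>k\<in>I. moment i i k k) = 1"
proof -
  have "(\<Sum>i\<in>I. \<Sum>k\<in>I. moment i i k k) = (\<integral>\<omega>. (\<Sum>i\<in>I. \<Sum>k\<in>I. quartic (X \<omega>) i i k k) \<partial>M)"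
    unfolding moment_def by (simp add: integrable_quartic integrable_sum)
  also have "\<dots> = (\<integral>\<omega>. 1 \<partial>M)"
  proof (rule integral_cong_AE)
    show "(\<lambda>\<omega>. \<Sum>i\<in>I. \<Sum>k\<in>I. quartic (X \<omega>) i i k k) \<in> borel_measurable M"
      unfolding quartic_def using measurable_X by measurable
    show "AE \<omega> in M. (\<Sum>i\<in>I. \<Sum>k\<in>I. quartic (X \<omega>) i i k k) = 1"
      using unit_X
    proof eventually_elim
      case (elim \<omega>)
      have "(\<Sum>i\<in>I. \<Sum>k\<in>I. quartic (X \<omega>) i i k k) = (\<Sum>i\<in>I. X \<omega> i * cnj (X \<omega> i))\<^sup>2"
        by (simp add: quartic_def sum_product power2_eq_square ac_simps)
      also have "(\<Sum>i\<in>I. X \<omega> i * cnj (X \<omega> i)) = of_real (\<Sum>i\<in>I. (cmod (X \<omega> i))\<^sup>2)"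
        unfolding of_real_sum by (intro sum.cong refl) (metis complex_norm_square)
      finally show ?case using elim by simp
    qed
  qed simp
  finally show ?thesis by (simp add: prob_space)
qed

lemma moment_normalization: "of_nat (card I) * (diag_moment + (of_nat (card I) - 1) * pair_moment) = 1"
proof -
  have "(\<Sum>i\<in>I. \<Sum>k\<in>I. moment i i k k) = of_nat (card I) * (diag_moment + of_nat (card I - 1) * pair_moment)"
    by (rule sum_sum_if_eq_const[OF finite_I]) (simp add: moment_eq_pattern moment_pattern_def)
  then show ?thesis using sum_moment_iikk card_I by simp
qed

lemma moment_conj_overlap:
  "of_nat (card I) * (diag_moment + (of_nat (card I) - 1) * cross_moment) = (\<integral>\<omega>. conj_overlap I (X \<omega>) \<partial>M)"
proof -
  have "(\<Sum>i\<in>I. \<Sum>k\<in>I. moment i k i k) = (\<integral>\<omega>. (\<Sum>i\<in>I. \<Sum>k\<in>I. quartic (X \<omega>) i k i k) \<partial>M)"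
    unfolding moment_def by (simp add: integrable_quartic integrable_sum)
  also have "\<dots> = (\<integral>\<omega>. conj_overlap I (X \<omega>) \<partial>M)"
    by (simp add: conj_overlap_eq_sum_quartic)
  finally have "(\<Sum>i\<in>I. \<Sum>k\<in>I. moment i k i k) = \<dots>" .
  moreover have "(\<Sum>i\<in>I. \<Sum>k\<in>I. moment i k i k) = of_nat (card I) * (diag_moment + of_nat (card I - 1) * cross_moment)"
    by (rule sum_sum_if_eq_const[OF finite_I]) (simp add: moment_eq_pattern moment_pattern_def)
  ultimately show ?thesis using card_I by simp
qed

lemma moment_conj_overlap_const:
  assumes "AE \<omega> in M. conj_overlap I (X \<omega>) = t"
  shows "of_nat (card I) * (diag_moment + (of_nat (card I) - 1) * cross_moment) = t"
proof -
  have "(\<integral>\<omega>. conj_overlap I (X \<omega>) \<partial>M) = (\<integral>\<omega>. t \<partial>M)"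
  proof (rule integral_cong_AE)
    show "(\<lambda>\<omega>. conj_overlap I (X \<omega>)) \<in> borel_measurable M"
      unfolding conj_overlap_def using measurable_X by measurable
  qed (use assms in simp_all)
  then show ?thesis using moment_conj_overlap by (simp add: prob_space)
qed

end

locale unitary_invariant_vector = orth_invariant_vector +
  assumes phase_invariant: "\<And>p i j k l. p \<in> I \<Longrightarrow> i\<in>I \<Longrightarrow> j\<in>I \<Longrightarrow> k\<in>I \<Longrightarrow> l\<in>I \<Longrightarrow>
      (\<integral>\<omega>. quartic (matvec I (phase_mat I p) (X \<omega>)) i j k l \<partial>M) = (\<integral>\<omega>. quartic (X \<omega>) i j k l \<partial>M)"
begin

lemma cross_moment_eq_0: "cross_moment = 0"
proof -
  have "matvec I (phase_mat I p0) w i = (if i = p0 then \<i> * w i else w i)" if "i \<in> I" for w i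
    using that unfolding matvec_def phase_mat_def
    by (auto simp: if_distrib[of "\<lambda>x. x * _"] finite_I cong: if_cong)
  then have "quartic (matvec I (phase_mat I p0) w) p0 q0 p0 q0 = - quartic w p0 q0 p0 q0" for w
    using p0_q0 by (simp add: quartic_def algebra_simps)
  then have "cross_moment = - cross_moment"
    using phase_invariant[OF p0_q0(1) p0_q0(1,2,1,2)] unfolding cross_moment_def moment_def by simp
  then show ?thesis by simp
qed

lemma pair_moment_eq: "pair_moment = 1 / (of_nat (card I) * (of_nat (card I) + 1))"
proof -
  have "of_nat (card I) * (of_nat (card I) + 1) * pair_moment = (1::complex)"
    using moment_normalization diag_moment_eq cross_moment_eq_0 by (simp add: algebra_simps)
  moreover have "(of_nat (card I) * (of_nat (card I) + 1) :: complex) \<noteq> 0"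
  proof -
    have "(of_nat (card I) * (of_nat (card I) + 1) :: complex) = of_nat (card I * Suc (card I))"
      by (simp add: algebra_simps)
    moreover have "card I * Suc (card I) \<noteq> 0" using card_I by simp
    ultimately show ?thesis by (metis of_nat_eq_0_iff)
  qed
  ultimately show ?thesis by (simp add: field_simps)
qed

end

section \<open>Haar measures and the uniform sphere\<close>

lemma of_real_mat_unitary:
  assumes "Q \<in> orthogonal_group I"
  shows "of_real_mat I Q \<in> unitary_group I"
  unfolding unitary_group_def
proof (intro CollectI conjI ballI)
  show "of_real_mat I Q \<in> mats I" unfolding mats_def of_real_mat_def by auto
  fix i j assume ij: "i \<in> I" "j \<in> I"
  have "(\<Sum>k\<in>I. cnj (of_real_mat I Q k i) * of_real_mat I Q k j) = of_real (\<Sum>k\<in>I. Q k i * Q k j)"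
    unfolding of_real_sum by (intro sum.cong refl) (simp add: of_real_mat_def ij)
  also have "(\<Sum>k\<in>I. Q k i * Q k j) = (if i = j then 1 else 0)"
    using assms ij unfolding orthogonal_group_def by auto
  finally show "(\<Sum>k\<in>I. cnj (of_real_mat I Q k i) * of_real_mat I Q k j) = (if i = j then 1 else 0)"
    by simp
qed

lemma phase_mat_unitary: "finite I \<Longrightarrow> phase_mat I p \<in> unitary_group I"
  unfolding unitary_group_def mats_def phase_mat_def
  by (auto simp: if_distrib[of "\<lambda>x. x * _"] if_distrib[of cnj] cong: if_cong)

lemma sum_matvec_mult_matvec:
  fixes A B :: "'i \<Rightarrow> 'i \<Rightarrow> 'a::comm_semiring_1"
  shows "(\<Sum>i\<in>I. (\<Sum>j\<in>I. A i j * w j) * (\<Sum>k\<in>I. B i k * v k))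
       = (\<Sum>j\<in>I. \<Sum>k\<in>I. w j * v k * (\<Sum>i\<in>I. A i j * B i k))"
proof -
  have "(\<Sum>i\<in>I. (\<Sum>j\<in>I. A i j * w j) * (\<Sum>k\<in>I. B i k * v k))
      = (\<Sum>i\<in>I. \<Sum>j\<in>I. \<Sum>k\<in>I. w j * v k * (A i j * B i k))"
    by (intro sum.cong refl) (simp only: sum_product, simp add: ac_simps)
  also have "\<dots> = (\<Sum>j\<in>I. \<Sum>i\<in>I. \<Sum>k\<in>I. w j * v k * (A i j * B i k))"
    by (rule sum.swap)
  also have "\<dots> = (\<Sum>j\<in>I. \<Sum>k\<in>I. \<Sum>i\<in>I. w j * v k * (A i j * B i k))"
    by (intro sum.cong refl sum.swap)
  finally show ?thesis by (simp add: sum_distrib_left)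
qed

lemma mult_if_eq_1_0: "x * (if j = k then 1 else 0) = (if j = k then x else (0::'a::semiring_1))"
  by simp

lemma sum_norm2_matvec_unitary:
  assumes "V \<in> unitary_group I" "finite I"
  shows "(\<Sum>i\<in>I. (cmod (matvec I V w i))\<^sup>2) = (\<Sum>i\<in>I. (cmod (w i))\<^sup>2)"
proof -
  have orth: "(\<Sum>i\<in>I. V i j * cnj (V i k)) = (if j = k then 1 else 0)" if "j \<in> I" "k \<in> I" for j k
    using assms(1) that unfolding unitary_group_def by (auto simp: mult.commute)
  have "complex_of_real (\<Sum>i\<in>I. (cmod (matvec I V w i))\<^sup>2)
      = (\<Sum>i\<in>I. (\<Sum>j\<in>I. V i j * w j) * (\<Sum>k\<in>I. cnj (V i k) * cnj (w k)))"
    unfolding of_real_sum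
    by (intro sum.cong refl) (simp add: matvec_def complex_norm_square del: of_real_power)
  also have "\<dots> = (\<Sum>j\<in>I. w j * cnj (w j))"
    using assms(2) by (simp add: sum_matvec_mult_matvec orth mult_if_eq_1_0 cong: sum.cong)
  also have "\<dots> = complex_of_real (\<Sum>i\<in>I. (cmod (w i))\<^sup>2)"
    unfolding of_real_sum by (intro sum.cong refl) (metis complex_norm_square)
  finally show ?thesis by (simp only: of_real_eq_iff)
qed

lemma sum_square_matvec_orthogonal:
  assumes "Q \<in> orthogonal_group I" "finite I"
  shows "(\<Sum>i\<in>I. (matvec I (of_real_mat I Q) w i)\<^sup>2) = (\<Sum>i\<in>I. (w i)\<^sup>2)"
proof -
  have orth: "(\<Sum>i\<in>I. of_real_mat I Q i j * of_real_mat I Q i k) = (if j = k then 1 else 0)"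
    if "j \<in> I" "k \<in> I" for j k
  proof -
    have "(\<Sum>i\<in>I. Q i j * Q i k) = (if j = k then 1 else 0)"
      using assms(1) that unfolding orthogonal_group_def by auto
    then show ?thesis
      unfolding of_real_mat_def using that by (simp flip: of_real_mult of_real_sum cong: sum.cong)
  qed
  have "(\<Sum>i\<in>I. (matvec I (of_real_mat I Q) w i)\<^sup>2)
      = (\<Sum>i\<in>I. (\<Sum>j\<in>I. of_real_mat I Q i j * w j) * (\<Sum>k\<in>I. of_real_mat I Q i k * w k))"
    by (intro sum.cong refl) (simp add: matvec_def power2_eq_square)
  also have "\<dots> = (\<Sum>j\<in>I. (w j)\<^sup>2)"
    using assms(2)
    by (simp add: sum_matvec_mult_matvec orth mult_if_eq_1_0 power2_eq_square cong: sum.cong)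
  finally show ?thesis .
qed

lemma measurable_mat_entry:
  assumes "i \<in> I" "j \<in> I"
  shows "(\<lambda>U. U i j) \<in> borel_measurable (mat_space I)"
  unfolding mat_space_def
  by (rule measurable_compose[OF measurable_component_singleton[OF assms(1)]
        measurable_component_singleton[OF assms(2)]])

lemma measurable_of_real_mat_entry:
  assumes "i \<in> I" "j \<in> I"
  shows "(\<lambda>Q. of_real_mat I Q i j) \<in> borel_measurable (mat_space I)"
proof -
  have "(\<lambda>Q. complex_of_real (Q i j)) \<in> borel_measurable (mat_space I)"
    by (rule measurable_compose[OF measurable_mat_entry[OF assms]]) simp
  then show ?thesis using assms by (simp add: of_real_mat_def)
qed

lemma measurable_vec_component:
  "i \<in> I \<Longrightarrow> (\<lambda>z. z i) \<in> borel_measurable (vec_space I)"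
  unfolding vec_space_def by (rule measurable_component_singleton)

lemma matmul_measurable:
  fixes V :: "'i \<Rightarrow> 'i \<Rightarrow> 'a::{comm_semiring_1, real_normed_algebra, second_countable_topology}"
  shows "matmul I V \<in> measurable (mat_space I) (mat_space I)"
  unfolding matmul_def
  by (subst (2) mat_space_def)
     (intro measurable_restrict borel_measurable_sum borel_measurable_times borel_measurable_const
        measurable_mat_entry)

lemma matvec_measurable:
  fixes V :: "'i \<Rightarrow> 'i \<Rightarrow> 'a::{comm_semiring_1, real_normed_algebra, second_countable_topology}"
  shows "matvec I V \<in> measurable (vec_space I) (vec_space I)"
  unfolding matvec_def
  by (subst (2) vec_space_def)
     (intro measurable_restrict borel_measurable_sum borel_measurable_times borel_measurable_const
        measurable_vec_component)

lemma matvec_entry_measurable: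
  assumes "\<And>j. j \<in> I \<Longrightarrow> (\<lambda>x. W x i j) \<in> borel_measurable M" "i \<in> I"
  shows "(\<lambda>x. matvec I (W x) w i :: complex) \<in> borel_measurable M"
  unfolding matvec_def using assms by simp

lemma matvec_matmul:
  fixes V U :: "'i \<Rightarrow> 'i \<Rightarrow> 'a::comm_semiring_1"
  assumes "i \<in> I"
  shows "matvec I (matmul I V U) w i = matvec I V (matvec I U w) i"
proof -
  have "matvec I (matmul I V U) w i = (\<Sum>j\<in>I. \<Sum>k\<in>I. V i k * U k j * w j)"
    using assms by (simp add: matvec_def matmul_def sum_distrib_right cong: sum.cong)
  also have "\<dots> = (\<Sum>k\<in>I. \<Sum>j\<in>I. V i k * U k j * w j)" by (rule sum.swap)
  also have "\<dots> = matvec I V (matvec I U w) i"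
    using assms by (simp add: matvec_def sum_distrib_left mult.assoc cong: sum.cong)
  finally show ?thesis .
qed

lemma matvec_of_real_mat: "matvec I (\<lambda>x y. complex_of_real (Q x y)) = matvec I (of_real_mat I Q)"
  unfolding matvec_def of_real_mat_def by (intro ext) (simp cong: sum.cong)

lemma matvec_of_real_mat_matmul:
  "matvec I (of_real_mat I (matmul I V Q)) w = matvec I (matmul I (of_real_mat I V) (of_real_mat I Q)) w"
  unfolding matvec_def of_real_mat_def matmul_def by (intro ext) (simp cong: sum.cong)

lemma integral_invariant_transform:
  fixes f :: "_ \<Rightarrow> 'b::{banach, second_countable_topology}"
  assumes "distr M N g = M" "sets M = sets N" "g \<in> measurable N N" "f \<in> borel_measurable N"
  shows "(\<integral>x. f (g x) \<partial>M) = integral\<^sup>L M f"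
proof -
  have "g \<in> measurable M N" using assms(2,3) measurable_cong_sets by blast
  then have "(\<integral>x. f (g x) \<partial>M) = integral\<^sup>L (distr M N g) f"
    by (rule integral_distr[symmetric, OF _ assms(4)])
  then show ?thesis using assms(1) by simp
qed

lemma AE_of_emeasure_eq_1:
  assumes "prob_space M" "emeasure M S = 1"
  shows "AE x in M. x \<in> S"
proof -
  interpret prob_space M by fact
  have "S \<in> sets M" using assms(2) emeasure_notin_sets by fastforce
  then show ?thesis using assms(2) AE_in_set_eq_1 by (simp add: emeasure_eq_measure)
qed

lemma integrable_entry_quartic:
  assumes "prob_space M" "finite I" "AE x in M. W x \<in> unitary_group I"
    and "\<And>a b. a \<in> I \<Longrightarrow> b \<in> I \<Longrightarrow> (\<lambda>x. W x a b) \<in> borel_measurable M"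
    and "i \<in> I" "j \<in> I" "k \<in> I" "l \<in> I" "p \<in> I" "q \<in> I" "r \<in> I" "s \<in> I"
  shows "integrable M (\<lambda>x. W x i p * cnj (W x j q) * W x k r * cnj (W x l s))"
proof -
  interpret prob_space M by fact
  show ?thesis
  proof (rule integrable_const_bound[where B=1])
    show "AE x in M. norm (W x i p * cnj (W x j q) * W x k r * cnj (W x l s)) \<le> 1"
      using assms(3)
    proof eventually_elim
      case (elim x)
      have "cmod (W x a b) \<le> 1" if "a \<in> I" "b \<in> I" for a b
      proof (rule norm_le_1_of_sum_norm2_eq_1[OF assms(2) _ that(1), where f="\<lambda>a. W x a b"])
        have "(\<Sum>c\<in>I. W x c b * cnj (W x c b)) = 1"
          using elim that unfolding unitary_group_def by (auto simp: mult.commute)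
        moreover have "complex_of_real (\<Sum>c\<in>I. (cmod (W x c b))\<^sup>2) = (\<Sum>c\<in>I. W x c b * cnj (W x c b))"
          unfolding of_real_sum by (intro sum.cong refl) (metis complex_norm_square)
        ultimately show "(\<Sum>c\<in>I. (cmod (W x c b))\<^sup>2) = 1"
          by (simp only: of_real_eq_1_iff)
      qed
      then show ?case using assms(5-) by (simp add: norm_mult mult_le_one)
    qed
  qed (use assms(4-) in measurable)
qed

lemma haar_unitary_entries:
  assumes "haar_unitary I \<mu>"
  shows "prob_space \<mu>" "AE U in \<mu>. U \<in> unitary_group I"
    and "\<And>a b. a \<in> I \<Longrightarrow> b \<in> I \<Longrightarrow> (\<lambda>U. U a b) \<in> borel_measurable \<mu>"
proof -
  have sets: "sets \<mu> = sets (mat_space I)" and em: "emeasure \<mu> (unitary_group I) = 1"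
    and ps: "prob_space \<mu>"
    using assms unfolding haar_unitary_def by auto
  show "prob_space \<mu>" by (fact ps)
  show "AE U in \<mu>. U \<in> unitary_group I" by (rule AE_of_emeasure_eq_1[OF ps em])
  show "(\<lambda>U. U a b) \<in> borel_measurable \<mu>" if "a \<in> I" "b \<in> I" for a b
    using measurable_mat_entry[OF that] measurable_cong_sets[OF sets refl] by blast
qed

lemma haar_orthogonal_entries:
  assumes "haar_orthogonal I \<mu>"
  shows "prob_space \<mu>" "AE Q in \<mu>. of_real_mat I Q \<in> unitary_group I"
    and "\<And>a b. a \<in> I \<Longrightarrow> b \<in> I \<Longrightarrow> (\<lambda>Q. of_real_mat I Q a b) \<in> borel_measurable \<mu>"
proof -
  have sets: "sets \<mu> = sets (mat_space I)" and em: "emeasure \<mu> (orthogonal_group I) = 1"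
    and ps: "prob_space \<mu>"
    using assms unfolding haar_orthogonal_def by auto
  show "prob_space \<mu>" by (fact ps)
  show "AE Q in \<mu>. of_real_mat I Q \<in> unitary_group I"
    using AE_of_emeasure_eq_1[OF ps em] by eventually_elim (rule of_real_mat_unitary)
  show "(\<lambda>Q. of_real_mat I Q a b) \<in> borel_measurable \<mu>" if "a \<in> I" "b \<in> I" for a b
    using measurable_of_real_mat_entry[OF that] measurable_cong_sets[OF sets refl] by blast
qed

lemma unitary_invariant_vectorI:
  assumes "prob_space M" "finite I" "card I \<ge> 2"
    and "\<And>i. i \<in> I \<Longrightarrow> (\<lambda>\<omega>. X \<omega> i) \<in> borel_measurable M"
    and "AE \<omega> in M. (\<Sum>i\<in>I. (cmod (X \<omega> i))\<^sup>2) = 1"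
    and "\<And>V i j k l. V \<in> unitary_group I \<Longrightarrow> i\<in>I \<Longrightarrow> j\<in>I \<Longrightarrow> k\<in>I \<Longrightarrow> l\<in>I \<Longrightarrow>
      (\<integral>\<omega>. quartic (matvec I V (X \<omega>)) i j k l \<partial>M) = (\<integral>\<omega>. quartic (X \<omega>) i j k l \<partial>M)"
  shows "unitary_invariant_vector M I X"
proof (intro unitary_invariant_vector.intro orth_invariant_vector.intro
    orth_invariant_vector_axioms.intro unitary_invariant_vector_axioms.intro)
  fix Q i j k l assume "Q \<in> orthogonal_group I" "i \<in> I" "j \<in> I" "k \<in> I" "l \<in> I"
  then show "(\<integral>\<omega>. quartic (matvec I (of_real_mat I Q) (X \<omega>)) i j k l \<partial>M) = (\<integral>\<omega>. quartic (X \<omega>) i j k l \<partial>M)"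
    by (intro assms(6) of_real_mat_unitary)
next
  fix p i j k l assume "p \<in> I" "i \<in> I" "j \<in> I" "k \<in> I" "l \<in> I"
  then show "(\<integral>\<omega>. quartic (matvec I (phase_mat I p) (X \<omega>)) i j k l \<partial>M) = (\<integral>\<omega>. quartic (X \<omega>) i j k l \<partial>M)"
    by (intro assms(6) phase_mat_unitary assms(2))
qed (fact assms)+

lemma haar_unitary_orbit_invariant:
  assumes haar: "haar_unitary I \<mu>" and "finite I" "card I \<ge> 2"
    and unit: "(\<Sum>i\<in>I. (cmod (\<phi> i))\<^sup>2) = 1"
  shows "unitary_invariant_vector \<mu> I (\<lambda>U. matvec I U \<phi>)"
proof (rule unitary_invariant_vectorI)
  have sets: "sets \<mu> = sets (mat_space I)"
    and inv: "\<And>V. V \<in> unitary_group I \<Longrightarrow> distr \<mu> (mat_space I) (matmul I V) = \<mu>"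
    using haar unfolding haar_unitary_def by auto
  show "prob_space \<mu>" by (rule haar_unitary_entries(1)[OF haar])
  show "(\<lambda>U. matvec I U \<phi> i) \<in> borel_measurable \<mu>" if "i \<in> I" for i
    by (rule matvec_entry_measurable[OF _ that]) (rule haar_unitary_entries(3)[OF haar that])
  show "AE U in \<mu>. (\<Sum>i\<in>I. (cmod (matvec I U \<phi> i))\<^sup>2) = 1"
    using haar_unitary_entries(2)[OF haar] by eventually_elim (simp add: sum_norm2_matvec_unitary assms)
  fix V i j k l assume V: "V \<in> unitary_group I" and ijkl: "i \<in> I" "j \<in> I" "k \<in> I" "l \<in> I"
  have "(\<integral>U. quartic (matvec I V (matvec I U \<phi>)) i j k l \<partial>\<mu>)
      = (\<integral>U. quartic (matvec I (matmul I V U) \<phi>) i j k l \<partial>\<mu>)"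
    by (intro Bochner_Integration.integral_cong refl quartic_cong[OF ijkl]) (simp add: matvec_matmul)
  also have "\<dots> = (\<integral>U. quartic (matvec I U \<phi>) i j k l \<partial>\<mu>)"
    by (rule integral_invariant_transform[OF inv[OF V] sets matmul_measurable])
       (rule quartic_measurable[OF _ ijkl], rule matvec_entry_measurable, (rule measurable_mat_entry | assumption)+)
  finally show "(\<integral>U. quartic (matvec I V (matvec I U \<phi>)) i j k l \<partial>\<mu>)
      = (\<integral>U. quartic (matvec I U \<phi>) i j k l \<partial>\<mu>)" .
qed (fact assms)+

lemma haar_orthogonal_orbit_invariant:
  assumes haar: "haar_orthogonal I \<mu>" and fin: "finite I" and "card I \<ge> 2"
    and unit: "(\<Sum>i\<in>I. (cmod (\<phi> i))\<^sup>2) = 1"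
  shows "orth_invariant_vector \<mu> I (\<lambda>Q. matvec I (of_real_mat I Q) \<phi>)"
    and "AE Q in \<mu>. conj_overlap I (matvec I (of_real_mat I Q) \<phi>) = conj_overlap I \<phi>"
proof -
  have sets: "sets \<mu> = sets (mat_space I)" and em: "emeasure \<mu> (orthogonal_group I) = 1"
    and inv: "\<And>V. V \<in> orthogonal_group I \<Longrightarrow> distr \<mu> (mat_space I) (matmul I V) = \<mu>"
    using haar unfolding haar_orthogonal_def by auto
  note ps = haar_orthogonal_entries(1)[OF haar]
  show "AE Q in \<mu>. conj_overlap I (matvec I (of_real_mat I Q) \<phi>) = conj_overlap I \<phi>"
    using AE_of_emeasure_eq_1[OF ps em]
    by eventually_elim (simp add: conj_overlap_def sum_square_matvec_orthogonal fin)
  show "orth_invariant_vector \<mu> I (\<lambda>Q. matvec I (of_real_mat I Q) \<phi>)"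
  proof (intro orth_invariant_vector.intro orth_invariant_vector_axioms.intro ps assms)
    show "(\<lambda>Q. matvec I (of_real_mat I Q) \<phi> i) \<in> borel_measurable \<mu>" if "i \<in> I" for i
      by (rule matvec_entry_measurable[OF _ that]) (rule haar_orthogonal_entries(3)[OF haar that])
    show "AE Q in \<mu>. (\<Sum>i\<in>I. (cmod (matvec I (of_real_mat I Q) \<phi> i))\<^sup>2) = 1"
      using haar_orthogonal_entries(2)[OF haar]
      by eventually_elim (simp add: sum_norm2_matvec_unitary fin unit)
    fix V i j k l assume V: "V \<in> orthogonal_group I" and ijkl: "i \<in> I" "j \<in> I" "k \<in> I" "l \<in> I"
    have "(\<integral>Q. quartic (matvec I (of_real_mat I V) (matvec I (of_real_mat I Q) \<phi>)) i j k l \<partial>\<mu>)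
        = (\<integral>Q. quartic (matvec I (of_real_mat I (matmul I V Q)) \<phi>) i j k l \<partial>\<mu>)"
      by (intro Bochner_Integration.integral_cong refl quartic_cong[OF ijkl])
         (simp add: matvec_matmul matvec_of_real_mat_matmul)
    also have "\<dots> = (\<integral>Q. quartic (matvec I (of_real_mat I Q) \<phi>) i j k l \<partial>\<mu>)"
      by (rule integral_invariant_transform[OF inv[OF V] sets matmul_measurable])
         (rule quartic_measurable[OF _ ijkl], rule matvec_entry_measurable, (rule measurable_of_real_mat_entry | assumption)+)
    finally show "(\<integral>Q. quartic (matvec I (of_real_mat I V) (matvec I (of_real_mat I Q) \<phi>)) i j k l \<partial>\<mu>)
        = (\<integral>Q. quartic (matvec I (of_real_mat I Q) \<phi>) i j k l \<partial>\<mu>)" .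
  qed
qed

lemma uniform_sphere_invariant:
  assumes sph: "uniform_sphere I \<sigma>" and "finite I" "card I \<ge> 2"
  shows "unitary_invariant_vector \<sigma> I (\<lambda>z. z)"
proof (rule unitary_invariant_vectorI)
  have sets: "sets \<sigma> = sets (vec_space I)" and em: "emeasure \<sigma> (unit_sphere_on I) = 1"
    and inv: "\<And>V. V \<in> unitary_group I \<Longrightarrow> distr \<sigma> (vec_space I) (matvec I V) = \<sigma>"
    using sph unfolding uniform_sphere_def by auto
  show ps: "prob_space \<sigma>" using sph unfolding uniform_sphere_def by auto
  show "(\<lambda>z. z i) \<in> borel_measurable \<sigma>" if "i \<in> I" for i
    using measurable_vec_component[OF that] measurable_cong_sets[OF sets refl] by blast
  show "AE z in \<sigma>. (\<Sum>i\<in>I. (cmod (z i))\<^sup>2) = 1"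
    using AE_of_emeasure_eq_1[OF ps em] by eventually_elim (simp add: unit_sphere_on_def)
  fix V i j k l assume V: "V \<in> unitary_group I" and ijkl: "i \<in> I" "j \<in> I" "k \<in> I" "l \<in> I"
  show "(\<integral>z. quartic (matvec I V z) i j k l \<partial>\<sigma>) = (\<integral>z. quartic z i j k l \<partial>\<sigma>)"
    by (rule integral_invariant_transform[OF inv[OF V] sets matvec_measurable])
       (rule quartic_measurable[OF measurable_vec_component ijkl])
qed (fact assms)+

section \<open>Exchanging the order of integration\<close>

text \<open>For finite sums of products of integrable functions the two iterated integrals agree,
  without any product measure being formed.\<close>

inductive separable :: "'a measure \<Rightarrow> 'b measure \<Rightarrow> ('a \<Rightarrow> 'b \<Rightarrow> complex) \<Rightarrow> bool" for Ma Mb where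
  separable_product: "integrable Ma F \<Longrightarrow> integrable Mb G \<Longrightarrow> separable Ma Mb (\<lambda>x y. F x * G y)"
| separable_add: "separable Ma Mb H1 \<Longrightarrow> separable Ma Mb H2 \<Longrightarrow> separable Ma Mb (\<lambda>x y. H1 x y + H2 x y)"
| separable_zero: "separable Ma Mb (\<lambda>x y. 0)"

lemma separable_integrable_right: "separable Ma Mb H \<Longrightarrow> integrable Mb (H x)"
  by (induction rule: separable.induct) auto

lemma separable_integrable_left: "separable Ma Mb H \<Longrightarrow> integrable Ma (\<lambda>x. H x y)"
  by (induction rule: separable.induct) auto

lemma separable_integrable_integral_right:
  "separable Ma Mb H \<Longrightarrow> integrable Ma (\<lambda>x. \<integral>y. H x y \<partial>Mb)"
  by (induction rule: separable.induct) (auto simp: separable_integrable_right)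

lemma separable_integrable_integral_left:
  "separable Ma Mb H \<Longrightarrow> integrable Mb (\<lambda>y. \<integral>x. H x y \<partial>Ma)"
  by (induction rule: separable.induct) (auto simp: separable_integrable_left)

lemma separable_integral_swap:
  "separable Ma Mb H \<Longrightarrow> (\<integral>x. (\<integral>y. H x y \<partial>Mb) \<partial>Ma) = (\<integral>y. (\<integral>x. H x y \<partial>Ma) \<partial>Mb)"
  by (induction rule: separable.induct)
     (auto simp: separable_integrable_left separable_integrable_right
        separable_integrable_integral_left separable_integrable_integral_right)

lemma separable_sum:
  assumes "finite S" "\<And>s. s \<in> S \<Longrightarrow> separable Ma Mb (H s)"
  shows "separable Ma Mb (\<lambda>x y. \<Sum>s\<in>S. H s x y)"
  using assms
proof (induction S rule: finite_induct)
  case empty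
  then show ?case using separable_zero by simp
next
  case (insert a F)
  then have "separable Ma Mb (\<lambda>x y. H a x y + (\<Sum>s\<in>F. H s x y))"
    by (intro separable_add) auto
  then show ?case using insert by simp
qed

lemma sum_product4:
  fixes a b c e :: "'i \<Rightarrow> 'a::comm_semiring_1"
  shows "(\<Sum>p\<in>I. a p) * (\<Sum>q\<in>I. b q) * (\<Sum>r\<in>I. c r) * (\<Sum>s\<in>I. e s) =
    (\<Sum>p\<in>I. \<Sum>q\<in>I. \<Sum>r\<in>I. \<Sum>s\<in>I. a p * b q * c r * e s)"
  by (simp only: sum_distrib_left[symmetric] sum_distrib_right[symmetric])

lemma quartic_matvec:
  assumes "i \<in> I" "j \<in> I" "k \<in> I" "l \<in> I"
  shows "quartic (matvec I W v) i j k l = (\<Sum>p\<in>I. \<Sum>q\<in>I. \<Sum>r\<in>I. \<Sum>s\<in>I.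
     (W i p * cnj (W j q) * W k r * cnj (W l s)) * quartic v p q r s)"
proof -
  have "quartic (matvec I W v) i j k l = (\<Sum>p\<in>I. W i p * v p) * (\<Sum>q\<in>I. cnj (W j q) * cnj (v q)) *
      (\<Sum>r\<in>I. W k r * v r) * (\<Sum>s\<in>I. cnj (W l s) * cnj (v s))"
    using assms by (simp add: quartic_def matvec_def)
  also have "\<dots> = (\<Sum>p\<in>I. \<Sum>q\<in>I. \<Sum>r\<in>I. \<Sum>s\<in>I.
      (W i p * v p) * (cnj (W j q) * cnj (v q)) * (W k r * v r) * (cnj (W l s) * cnj (v s)))"
    by (rule sum_product4)
  also have "\<dots> = (\<Sum>p\<in>I. \<Sum>q\<in>I. \<Sum>r\<in>I. \<Sum>s\<in>I.
     (W i p * cnj (W j q) * W k r * cnj (W l s)) * quartic v p q r s)"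
    by (simp add: quartic_def ac_simps)
  finally show ?thesis .
qed

lemma separable_quartic_matvec:
  fixes W :: "'a \<Rightarrow> 'i \<Rightarrow> 'i \<Rightarrow> complex" and v :: "'b \<Rightarrow> 'i \<Rightarrow> complex"
  assumes "finite I" "i \<in> I" "j \<in> I" "k \<in> I" "l \<in> I"
    and "\<And>p q r s. p \<in> I \<Longrightarrow> q \<in> I \<Longrightarrow> r \<in> I \<Longrightarrow> s \<in> I \<Longrightarrow>
       integrable Ma (\<lambda>x. W x i p * cnj (W x j q) * W x k r * cnj (W x l s))"
    and "\<And>p q r s. p \<in> I \<Longrightarrow> q \<in> I \<Longrightarrow> r \<in> I \<Longrightarrow> s \<in> I \<Longrightarrow>
       integrable Mb (\<lambda>y. quartic (v y) p q r s)"
  shows "separable Ma Mb (\<lambda>x y. quartic (matvec I (W x) (v y)) i j k l)"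
  unfolding quartic_matvec[OF assms(2-5)]
  by (intro separable_sum assms(1) separable_product[where F="\<lambda>x. _ x" and G="\<lambda>y. _ y"] assms(6,7))

section \<open>Purity as a sum of fourth moments\<close>

definition purity_sum :: "nat \<Rightarrow> (nat \<Rightarrow> nat) \<Rightarrow> nat set \<Rightarrow> ((nat \<Rightarrow> nat) \<Rightarrow> complex) \<Rightarrow> complex" where
  "purity_sum N d A w = (\<Sum>a\<in>sub_idx d A. \<Sum>a'\<in>sub_idx d A.
     \<Sum>b\<in>sub_idx d ({..<N} - A). \<Sum>b'\<in>sub_idx d ({..<N} - A).
       quartic w (merge_idx A a b) (merge_idx A a' b) (merge_idx A a' b') (merge_idx A a b'))"

lemma purity_eq_Re_purity_sum: "purity N d A w = Re (purity_sum N d A w)"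
  unfolding purity_def purity_sum_def rdm_def
  by (simp add: sum_product quartic_def ac_simps)

lemma finite_sub_idx: "finite A \<Longrightarrow> finite (sub_idx d A)"
  unfolding sub_idx_def by (simp add: finite_PiE)

lemma card_sub_idx: "finite A \<Longrightarrow> card (sub_idx d A) = (\<Prod>i\<in>A. d i)"
  unfolding sub_idx_def by (simp add: card_PiE)

lemma finite_basis_idx: "finite (basis_idx N d)"
  unfolding basis_idx_def by (simp add: finite_sub_idx)

lemma card_basis_idx: "card (basis_idx N d) = (\<Prod>i<N. d i)"
  unfolding basis_idx_def by (simp add: card_sub_idx)

lemma merge_idx_in_basis_idx:
  assumes "A \<subseteq> {..<N}" "a \<in> sub_idx d A" "b \<in> sub_idx d ({..<N} - A)"
  shows "merge_idx A a b \<in> basis_idx N d"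
  using assms unfolding basis_idx_def sub_idx_def merge_idx_def by (auto simp: PiE_iff extensional_def)

lemma merge_idx_eq_iff:
  assumes "a \<in> sub_idx d A" "a' \<in> sub_idx d A" "b \<in> sub_idx d ({..<N} - A)" "b' \<in> sub_idx d ({..<N} - A)"
  shows "merge_idx A a b = merge_idx A a' b' \<longleftrightarrow> a = a' \<and> b = b'"
proof
  assume h: "merge_idx A a b = merge_idx A a' b'"
  have "a x = a' x \<and> b x = b' x" for x
  proof (cases "x \<in> A")
    case True
    then have "b x = undefined" "b' x = undefined"
      using assms(3,4) unfolding sub_idx_def by (auto intro: PiE_arb)
    then show ?thesis using fun_cong[OF h, of x] True by (simp add: merge_idx_def)
  next
    case False
    then have "a x = undefined" "a' x = undefined"
      using assms(1,2) unfolding sub_idx_def by (auto intro: PiE_arb)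
    then show ?thesis using fun_cong[OF h, of x] False by (simp add: merge_idx_def)
  qed
  then show "a = a' \<and> b = b'" by auto
qed simp

text \<open>The four merged indices of a purity term coincide only according to whether a = a' and
  whether b = b', so the moment pattern is constant on each of these four cases.\<close>

lemma sum_moment_pattern_merge:
  fixes d :: "nat \<Rightarrow> nat" and \<beta> \<alpha> \<gamma> :: "'a::comm_ring_1"
  assumes "A \<subseteq> {..<N}"
  defines "nA \<equiv> card (sub_idx d A)" and "nB \<equiv> card (sub_idx d ({..<N} - A))"
  shows "(\<Sum>a\<in>sub_idx d A. \<Sum>a'\<in>sub_idx d A. \<Sum>b\<in>sub_idx d ({..<N} - A). \<Sum>b'\<in>sub_idx d ({..<N} - A).
       moment_pattern \<beta> \<alpha> \<gamma> (merge_idx A a b) (merge_idx A a' b) (merge_idx A a' b') (merge_idx A a b'))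
     = of_nat nA * of_nat nB * (\<beta> + of_nat (nB - 1) * \<alpha>) + of_nat nA * of_nat (nA - 1) * of_nat nB * \<alpha>"
proof -
  let ?SA = "sub_idx d A" and ?SB = "sub_idx d ({..<N} - A)"
  have fin: "finite ?SA" "finite ?SB"
    using finite_subset[OF assms(1)] by (auto intro: finite_sub_idx)
  have val: "moment_pattern \<beta> \<alpha> \<gamma> (merge_idx A a b) (merge_idx A a' b) (merge_idx A a' b') (merge_idx A a b')
      = (if a = a' then (if b = b' then \<beta> else \<alpha>) else (if b = b' then \<alpha> else 0))"
    if h: "a \<in> ?SA" "a' \<in> ?SA" "b \<in> ?SB" "b' \<in> ?SB" for a a' b b'
  proof -
    have "merge_idx A a b = merge_idx A a' b \<longleftrightarrow> a = a'"
      "merge_idx A a' b = merge_idx A a' b' \<longleftrightarrow> b = b'"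
      "merge_idx A a' b' = merge_idx A a b' \<longleftrightarrow> a = a'"
      "merge_idx A a b = merge_idx A a b' \<longleftrightarrow> b = b'"
      "merge_idx A a b = merge_idx A a' b' \<longleftrightarrow> a = a' \<and> b = b'"
      "merge_idx A a' b = merge_idx A a b' \<longleftrightarrow> a = a' \<and> b = b'"
      using merge_idx_eq_iff[OF h(1,2) h(3) h(3)] merge_idx_eq_iff[OF h(2,2) h(3,4)]
        merge_idx_eq_iff[OF h(2,1) h(4,4)] merge_idx_eq_iff[OF h(1,1) h(3,4)]
        merge_idx_eq_iff[OF h] merge_idx_eq_iff[OF h(2,1,3,4)]
      by auto
    then show ?thesis unfolding moment_pattern_def
      by (simp only:) (cases "a = a'"; cases "b = b'"; simp)
  qed
  have inner: "(\<Sum>b\<in>?SB. \<Sum>b'\<in>?SB. if a = a' then (if b = b' then \<beta> else \<alpha>) else (if b = b' then \<alpha> else 0))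
      = (if a = a' then of_nat nB * (\<beta> + of_nat (nB - 1) * \<alpha>) else of_nat nB * \<alpha>)"
    for a a' :: "nat \<Rightarrow> nat"
    using fin(2) unfolding nB_def by (cases "a = a'") (simp_all add: sum_sum_if_eq_const)
  have "(\<Sum>a\<in>?SA. \<Sum>a'\<in>?SA. \<Sum>b\<in>?SB. \<Sum>b'\<in>?SB.
       moment_pattern \<beta> \<alpha> \<gamma> (merge_idx A a b) (merge_idx A a' b) (merge_idx A a' b') (merge_idx A a b'))
      = (\<Sum>a\<in>?SA. \<Sum>a'\<in>?SA. if a = a' then of_nat nB * (\<beta> + of_nat (nB - 1) * \<alpha>) else of_nat nB * \<alpha>)"
    by (simp add: val inner cong: sum.cong)
  also have "\<dots> = of_nat nA * (of_nat nB * (\<beta> + of_nat (nB - 1) * \<alpha>) + of_nat (nA - 1) * (of_nat nB * \<alpha>))"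
    unfolding nA_def by (rule sum_sum_if_eq_const[OF fin(1)]) simp
  finally show ?thesis by (simp add: algebra_simps)
qed

lemma finite_bipartitions: "finite (bipartitions N)"
  by (rule finite_subset[of _ "Pow {..<N}"]) (auto simp: bipartitions_def)

lemma card_bipartitions:
  assumes "N \<ge> 1"
  shows "card (bipartitions N) = 2 ^ (N - 1) - 1"
proof -
  let ?S = "{1..<N}"
  have all: "{..<N} = insert 0 ?S" using assms by auto
  have "bipartitions N = insert 0 ` Pow ?S - {{..<N}}"
  proof (intro equalityI subsetI)
    fix A assume "A \<in> bipartitions N"
    then have "A = insert 0 (A - {0})" "A - {0} \<subseteq> ?S" "A \<noteq> {..<N}"
      unfolding bipartitions_def by auto
    then show "A \<in> insert 0 ` Pow ?S - {{..<N}}" by blast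
  qed (auto simp: bipartitions_def all)
  moreover have "inj_on (insert 0) (Pow ?S)"
    by (rule inj_onI) (metis Pow_iff atLeastLessThan_iff insert_ident not_one_le_zero subsetD)
  moreover have "{..<N} \<in> insert 0 ` Pow ?S" using all by blast
  ultimately show ?thesis by (simp add: card_Diff_singleton card_image card_Pow)
qed

lemma prod_split_complement:
  fixes f :: "nat \<Rightarrow> 'a::comm_monoid_mult"
  assumes "A \<subseteq> {..<N}"
  shows "(\<Prod>i\<in>A. f i) * (\<Prod>i\<in>{..<N} - A. f i) = (\<Prod>i<N. f i)"
  using prod.subset_diff[OF assms finite_lessThan, of f] by (simp add: mult.commute)

lemma sum_basis_product_state:
  fixes f :: "complex \<Rightarrow> 'a::comm_ring_1"
  assumes "\<And>x y. f (x * y) = f x * f y" "f 1 = 1"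
  shows "(\<Sum>x\<in>basis_idx N d. f (product_state N \<psi> x)) = (\<Prod>i<N. \<Sum>k<d i. f (\<psi> i k))"
proof -
  have f_prod: "f (\<Prod>i\<in>S. g i) = (\<Prod>i\<in>S. f (g i))" for S :: "nat set" and g
    by (induction S rule: infinite_finite_induct) (simp_all add: assms)
  have "(\<Prod>i<N. \<Sum>k<d i. f (\<psi> i k)) = (\<Sum>g\<in>PiE {..<N} (\<lambda>i. {..<d i}). \<Prod>i<N. f (\<psi> i (g i)))"
    by (rule prod_sum_PiE) auto
  then show ?thesis
    unfolding basis_idx_def sub_idx_def product_state_def by (simp add: f_prod)
qed

lemma sum_norm2_product_state:
  "(\<Sum>x\<in>basis_idx N d. (cmod (product_state N \<psi> x))\<^sup>2) = (\<Prod>i<N. \<Sum>k<d i. (cmod (\<psi> i k))\<^sup>2)"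
  using sum_basis_product_state[of "\<lambda>z. (cmod z)\<^sup>2"] by (simp add: norm_mult power_mult_distrib)

lemma conj_overlap_product_state:
  "conj_overlap (basis_idx N d) (product_state N \<psi>) = (\<Prod>i<N. conj_overlap {..<d i} (\<psi> i))"
  using sum_basis_product_state[of "\<lambda>z. z\<^sup>2"]
  by (simp add: conj_overlap_def power_mult_distrib prod.distrib)

lemma sum_power_01:
  fixes f :: "nat \<Rightarrow> 'a::comm_semiring_1"
  assumes "finite S"
  shows "(\<Sum>s\<in>PiE S (\<lambda>_. {0::nat, 1}). \<Prod>i\<in>S. f i ^ s i) = (\<Prod>i\<in>S. 1 + f i)"
proof -
  have "(\<Prod>i\<in>S. 1 + f i) = (\<Prod>i\<in>S. \<Sum>s\<in>{0::nat, 1}. f i ^ s)" by simp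
  also have "\<dots> = (\<Sum>s\<in>PiE S (\<lambda>_. {0::nat, 1}). \<Prod>i\<in>S. f i ^ s i)"
    by (rule prod_sum_PiE) (use assms in auto)
  finally show ?thesis by simp
qed

section \<open>Average entangling power\<close>

lemma uniform_sphere_integral_conj_overlap:
  assumes sph: "uniform_sphere {..<n} \<sigma>" and "n \<ge> 2"
  shows "integrable \<sigma> (conj_overlap {..<n})" "integral\<^sup>L \<sigma> (conj_overlap {..<n}) = 2 / (of_nat n + 1)"
proof -
  interpret unitary_invariant_vector \<sigma> "{..<n}" "\<lambda>z. z"
    by (rule uniform_sphere_invariant[OF sph]) (use assms in auto)
  show "integrable \<sigma> (conj_overlap {..<n})"
    unfolding conj_overlap_eq_sum_quartic[abs_def] by (intro Bochner_Integration.integrable_sum integrable_quartic) auto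
  have "integral\<^sup>L \<sigma> (conj_overlap {..<n}) = of_nat n * diag_moment"
    using moment_conj_overlap cross_moment_eq_0 by simp
  also have "\<dots> = of_nat n * (2 / (of_nat n * (of_nat n + 1)))"
    using diag_moment_eq cross_moment_eq_0 pair_moment_eq by simp
  also have "\<dots> = 2 / (of_nat n + 1)"
    using assms(2) by simp
  finally show "integral\<^sup>L \<sigma> (conj_overlap {..<n}) = 2 / (of_nat n + 1)" .
qed

lemma purity_unitary_algebra:
  fixes x y a :: complex
  assumes "D = x * y" "D \<noteq> 0" "D + 1 \<noteq> 0" "a = 1 / (D * (D + 1))"
  shows "x * y * (2 * a + (y - 1) * a) + x * (x - 1) * y * a = (x + y) / (D + 1)"
proof -
  have "x * y * (2 * a + (y - 1) * a) + x * (x - 1) * y * a = (D * a) * (x + y)"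
    unfolding assms(1) by (simp add: algebra_simps)
  also have "D * a = 1 / (D + 1)" using assms(2-4) by simp
  finally show ?thesis by simp
qed

text \<open>Eliminating the three unknown moments from the rotation relation and the two
  normalizations.\<close>

lemma purity_orthogonal_algebra:
  fixes a b c t x y :: complex
  assumes D: "D = x * y" "D - 1 \<noteq> 0" "D + 2 \<noteq> 0"
    and rot: "b = 2 * a + c" and norm: "D * (b + (D - 1) * a) = 1" and overlap: "D * (b + (D - 1) * c) = t"
  shows "x * y * (b + (y - 1) * a) + x * (x - 1) * y * a
    = (t * (D + 1) - 2 + (D - t) * (x + y)) / ((D - 1) * (D + 2))"
proof -
  have nz: "(D - 1) * (D + 2) \<noteq> 0" using D(2,3) by simp
  have "(D - 1) * (D + 2) * (D * a) = D * (D * (b + (D - 1) * a)) - D * (b + (D - 1) * c)"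
    unfolding rot by (simp add: algebra_simps)
  then have "D * a = (D - t) / ((D - 1) * (D + 2))"
    using norm overlap nz by (simp add: eq_divide_eq ac_simps)
  moreover have "x * y * (b + (y - 1) * a) + x * (x - 1) * y * a = 1 + (x + y - 1 - D) * (D * a)"
    using norm unfolding D(1) by (simp add: algebra_simps)
  ultimately have "x * y * (b + (y - 1) * a) + x * (x - 1) * y * a
      = ((D - 1) * (D + 2) + (x + y - 1 - D) * (D - t)) / ((D - 1) * (D + 2))"
    using nz by (simp add: add_divide_eq_iff)
  also have "(D - 1) * (D + 2) + (x + y - 1 - D) * (D - t) = t * (D + 1) - 2 + (D - t) * (x + y)"
    by (simp add: algebra_simps)
  finally show ?thesis .
qed

lemma sum_affine_divide:
  fixes s :: "'a \<Rightarrow> 'b::field"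
  shows "(\<Sum>x\<in>S. (p + q * s x) / r) = (of_nat (card S) * p + q * sum s S) / r"
  by (simp add: sum_divide_distrib[symmetric] sum.distrib sum_distrib_left)

lemma integral_affine_Re:
  fixes f :: "_ \<Rightarrow> complex"
  assumes "prob_space M" "integrable M f"
  shows "(\<integral>x. a - c * Re (f x) \<partial>M) = a - c * Re (integral\<^sup>L M f)"
proof -
  interpret prob_space M by fact
  show ?thesis using assms(2) by (simp add: prob_space)
qed

locale multipartite =
  fixes N :: nat and d :: "nat \<Rightarrow> nat" and \<sigma> :: "nat \<Rightarrow> (nat \<Rightarrow> complex) measure"
  assumes N_ge_2: "N \<ge> 2" and d_ge_2: "\<And>i. i < N \<Longrightarrow> d i \<ge> 2"
    and uniform_sphere_factor: "\<And>i. i < N \<Longrightarrow> uniform_sphere {..<d i} (\<sigma> i)"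
begin

abbreviation "I \<equiv> basis_idx N d"
abbreviation "P \<equiv> PiM {..<N} \<sigma>"

lemma prob_space_factor: "i < N \<Longrightarrow> prob_space (\<sigma> i)"
  using uniform_sphere_factor unfolding uniform_sphere_def by auto

lemma prob_space_P: "prob_space P"
  by (rule prob_space_PiM) (simp add: prob_space_factor)

lemma card_bipartitions_eq: "real (card (bipartitions N)) = 2 ^ (N - 1) - 1"
  using card_bipartitions[of N] N_ge_2 by simp

lemma bipartition_count_pos: "(2::real) ^ (N - 1) - 1 > 0"
proof -
  have "(2::real) ^ (N - 1) \<ge> 2 ^ 1" by (rule power_increasing) (use N_ge_2 in auto)
  then show ?thesis by simp
qed

lemma prod_d_ge_1: "A \<subseteq> {..<N} \<Longrightarrow> (\<Prod>i\<in>A. d i) \<ge> 1"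
  using d_ge_2 by (intro prod_ge_1) force

lemma prod_d_ge_2: "(\<Prod>i<N. d i) \<ge> 2"
proof -
  have "(2::nat) \<le> 2 ^ N" using N_ge_2 by (simp add: self_le_power)
  also have "\<dots> = (\<Prod>i<N. 2)" by simp
  also have "\<dots> \<le> (\<Prod>i<N. d i)" by (rule prod_mono) (use d_ge_2 in auto)
  finally show ?thesis .
qed

lemma card_I_ge_2: "card I \<ge> 2"
  using prod_d_ge_2 by (simp add: card_basis_idx)

lemma dim_nonzero:
  "(of_nat (card I) :: complex) \<noteq> 0" "(of_nat (card I) + 1 :: complex) \<noteq> 0"
  "(of_nat (card I) - 1 :: complex) \<noteq> 0" "(of_nat (card I) + 2 :: complex) \<noteq> 0"
proof -
  have "of_nat (card I) + (1::complex) = of_nat (card I + 1)" "of_nat (card I) + (2::complex) = of_nat (card I + 2)"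
    by simp_all
  then show "(of_nat (card I) + 1 :: complex) \<noteq> 0" "(of_nat (card I) + 2 :: complex) \<noteq> 0"
    by (simp_all only: of_nat_eq_0_iff)
  show "(of_nat (card I) :: complex) \<noteq> 0" "(of_nat (card I) - 1 :: complex) \<noteq> 0"
    using card_I_ge_2 by simp_all
qed

definition purity_total :: "((nat \<Rightarrow> nat) \<Rightarrow> complex) \<Rightarrow> complex" where
  "purity_total w = (\<Sum>A\<in>bipartitions N. purity_sum N d A w)"

lemma one_tangle_eq: "one_tangle N d w = 2 - 2 / (2 ^ (N - 1) - 1) * Re (purity_total w)"
proof -
  let ?K = "(2::real) ^ (N - 1) - 1"
  have "one_tangle N d w = 1 / ?K * (2 * real (card (bipartitions N)) - 2 * Re (purity_total w))"
    unfolding one_tangle_def tau_bip_def purity_eq_Re_purity_sum purity_total_def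
    by (simp add: sum_subtractf sum_distrib_left)
  then show ?thesis
    using bipartition_count_pos unfolding card_bipartitions_eq by (simp add: field_simps)
qed

lemma measurable_product_state:
  assumes "x \<in> I"
  shows "(\<lambda>\<psi>. product_state N \<psi> x) \<in> borel_measurable P"
  unfolding product_state_def
proof (rule borel_measurable_prod)
  fix i assume i: "i \<in> {..<N}"
  then have "x i < d i" using assms by (auto simp: basis_idx_def sub_idx_def)
  then have "(\<lambda>z. z (x i)) \<in> borel_measurable (\<sigma> i)"
    using measurable_vec_component[of "x i" "{..<d i}"] uniform_sphere_factor i
    unfolding uniform_sphere_def by (auto cong: measurable_cong_sets)
  then show "(\<lambda>\<psi>. \<psi> i (x i)) \<in> borel_measurable P"
    using measurable_component_singleton[OF i, of \<sigma>] by (rule measurable_compose[rotated])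
qed

lemma AE_unit_product_state: "AE \<psi> in P. (\<Sum>x\<in>I. (cmod (product_state N \<psi> x))\<^sup>2) = 1"
proof -
  have "AE \<psi> in P. (\<Sum>k<d i. (cmod (\<psi> i k))\<^sup>2) = 1" if i: "i < N" for i
  proof -
    have "AE z in \<sigma> i. z \<in> unit_sphere_on {..<d i}"
      using AE_of_emeasure_eq_1 uniform_sphere_factor[OF i] unfolding uniform_sphere_def by auto
    then have "AE z in \<sigma> i. (\<Sum>k<d i. (cmod (z k))\<^sup>2) = 1"
      by eventually_elim (simp add: unit_sphere_on_def)
    then show ?thesis
      using AE_PiM_component[of "{..<N}" \<sigma> i] prob_space_factor i by blast
  qed
  then have "AE \<psi> in P. \<forall>i\<in>{..<N}. (\<Sum>k<d i. (cmod (\<psi> i k))\<^sup>2) = 1"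
    by (intro eventually_ball_finite) auto
  then show ?thesis by eventually_elim (simp add: sum_norm2_product_state)
qed

lemma integrable_quartic_product_state:
  assumes "p \<in> I" "q \<in> I" "r \<in> I" "s \<in> I"
  shows "integrable P (\<lambda>\<psi>. quartic (product_state N \<psi>) p q r s)"
  by (rule integrable_quartic_unit_vector[OF prob_space_P finite_basis_idx measurable_product_state
        AE_unit_product_state assms])

lemma separable_purity_total:
  assumes "prob_space \<mu>" "AE x in \<mu>. W x \<in> unitary_group I"
    and "\<And>a b. a \<in> I \<Longrightarrow> b \<in> I \<Longrightarrow> (\<lambda>x. W x a b) \<in> borel_measurable \<mu>"
  shows "separable \<mu> P (\<lambda>x \<psi>. purity_total (matvec I (W x) (product_state N \<psi>)))"
  unfolding purity_total_def purity_sum_def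
proof (intro separable_sum finite_bipartitions)
  fix A a a' b b' assume A: "A \<in> bipartitions N" and h: "a \<in> sub_idx d A" "a' \<in> sub_idx d A"
    "b \<in> sub_idx d ({..<N} - A)" "b' \<in> sub_idx d ({..<N} - A)"
  then have "A \<subseteq> {..<N}" by (simp add: bipartitions_def)
  then show "separable \<mu> P (\<lambda>x \<psi>. quartic (matvec I (W x) (product_state N \<psi>))
      (merge_idx A a b) (merge_idx A a' b) (merge_idx A a' b') (merge_idx A a b'))"
    by (intro separable_quartic_matvec finite_basis_idx merge_idx_in_basis_idx h
        integrable_entry_quartic[OF assms(1) finite_basis_idx assms(2,3)] integrable_quartic_product_state)
qed (auto simp: bipartitions_def intro: finite_sub_idx finite_subset)

lemma integral_entangling_power:
  assumes "prob_space \<mu>" "AE x in \<mu>. W x \<in> unitary_group I"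
    and "\<And>a b. a \<in> I \<Longrightarrow> b \<in> I \<Longrightarrow> (\<lambda>x. W x a b) \<in> borel_measurable \<mu>"
    and inner: "\<And>\<phi>. (\<Sum>x\<in>I. (cmod (\<phi> x))\<^sup>2) = 1 \<Longrightarrow> (\<integral>x. purity_total (matvec I (W x) \<phi>) \<partial>\<mu>) = g \<phi>"
    and "(\<lambda>\<psi>. g (product_state N \<psi>)) \<in> borel_measurable P"
  shows "(\<integral>x. entangling_power N d \<sigma> (W x) \<partial>\<mu>) = 2 - 2 / (2 ^ (N - 1) - 1) *
     Re (\<integral>\<psi>. g (product_state N \<psi>) \<partial>P)"
proof -
  let ?G = "\<lambda>x \<psi>. purity_total (matvec I (W x) (product_state N \<psi>))"
  let ?c = "2 / (2 ^ (N - 1) - 1) :: real"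
  have sep: "separable \<mu> P ?G" by (rule separable_purity_total[OF assms(1-3)])
  have "entangling_power N d \<sigma> (W x) = 2 - ?c * Re (\<integral>\<psi>. ?G x \<psi> \<partial>P)" for x
    unfolding entangling_power_def one_tangle_eq
    by (rule integral_affine_Re[OF prob_space_P separable_integrable_right[OF sep]])
  then have "(\<integral>x. entangling_power N d \<sigma> (W x) \<partial>\<mu>) = (\<integral>x. 2 - ?c * Re (\<integral>\<psi>. ?G x \<psi> \<partial>P) \<partial>\<mu>)"
    by simp
  also have "\<dots> = 2 - ?c * Re (\<integral>x. (\<integral>\<psi>. ?G x \<psi> \<partial>P) \<partial>\<mu>)"
    by (rule integral_affine_Re[OF assms(1) separable_integrable_integral_right[OF sep]])
  also have "(\<integral>x. (\<integral>\<psi>. ?G x \<psi> \<partial>P) \<partial>\<mu>) = (\<integral>\<psi>. (\<integral>x. ?G x \<psi> \<partial>\<mu>) \<partial>P)"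
    by (rule separable_integral_swap[OF sep])
  also have "\<dots> = (\<integral>\<psi>. g (product_state N \<psi>) \<partial>P)"
  proof (rule integral_cong_AE)
    show "(\<lambda>\<psi>. \<integral>x. ?G x \<psi> \<partial>\<mu>) \<in> borel_measurable P"
      by (rule borel_measurable_integrable[OF separable_integrable_integral_left[OF sep]])
    show "AE \<psi> in P. (\<integral>x. ?G x \<psi> \<partial>\<mu>) = g (product_state N \<psi>)"
      using AE_unit_product_state by eventually_elim (rule inner)
  qed (fact assms(5))
  finally show ?thesis .
qed

lemma integral_purity_sum:
  assumes "A \<in> bipartitions N"
    and int: "\<And>i j k l. i \<in> I \<Longrightarrow> j \<in> I \<Longrightarrow> k \<in> I \<Longrightarrow> l \<in> I \<Longrightarrow>
      integrable M (\<lambda>x. quartic (X x) i j k l)"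
    and pattern: "\<And>i j k l. i \<in> I \<Longrightarrow> j \<in> I \<Longrightarrow> k \<in> I \<Longrightarrow> l \<in> I \<Longrightarrow>
      (\<integral>x. quartic (X x) i j k l \<partial>M) = moment_pattern \<beta> \<alpha> \<gamma> i j k l"
  defines "dA \<equiv> of_nat (\<Prod>i\<in>A. d i) :: complex" and "dB \<equiv> of_nat (\<Prod>i\<in>{..<N} - A. d i) :: complex"
  shows "(\<integral>x. purity_sum N d A (X x) \<partial>M) = dA * dB * (\<beta> + (dB - 1) * \<alpha>) + dA * (dA - 1) * dB * \<alpha>"
proof -
  have A: "A \<subseteq> {..<N}" "finite A" using assms(1) by (auto simp: bipartitions_def intro: finite_subset)
  have "(\<integral>x. purity_sum N d A (X x) \<partial>M)
      = (\<Sum>a\<in>sub_idx d A. \<Sum>a'\<in>sub_idx d A. \<Sum>b\<in>sub_idx d ({..<N} - A). \<Sum>b'\<in>sub_idx d ({..<N} - A).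
         moment_pattern \<beta> \<alpha> \<gamma> (merge_idx A a b) (merge_idx A a' b) (merge_idx A a' b') (merge_idx A a b'))"
    unfolding purity_sum_def by (simp add: int pattern merge_idx_in_basis_idx A)
  also have "\<dots> = dA * dB * (\<beta> + (dB - 1) * \<alpha>) + dA * (dA - 1) * dB * \<alpha>"
    unfolding sum_moment_pattern_merge[OF A(1)] card_sub_idx[OF A(2)] card_sub_idx[OF finite_Diff[OF finite_lessThan]]
    using prod_d_ge_1[OF A(1)] prod_d_ge_1[of "{..<N} - A"] by (simp add: dA_def dB_def)
  finally show ?thesis .
qed

lemma integral_purity_total:
  assumes int: "\<And>i j k l. i \<in> I \<Longrightarrow> j \<in> I \<Longrightarrow> k \<in> I \<Longrightarrow> l \<in> I \<Longrightarrow>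
      integrable M (\<lambda>x. quartic (X x) i j k l)"
    and pattern: "\<And>i j k l. i \<in> I \<Longrightarrow> j \<in> I \<Longrightarrow> k \<in> I \<Longrightarrow> l \<in> I \<Longrightarrow>
      (\<integral>x. quartic (X x) i j k l \<partial>M) = moment_pattern \<beta> \<alpha> \<gamma> i j k l"
    and per_bipartition: "\<And>A. A \<in> bipartitions N \<Longrightarrow>
      (let dA = of_nat (\<Prod>i\<in>A. d i); dB = of_nat (\<Prod>i\<in>{..<N} - A. d i)
       in dA * dB * (\<beta> + (dB - 1) * \<alpha>) + dA * (dA - 1) * dB * \<alpha>) = f A"
  shows "(\<integral>x. purity_total (X x) \<partial>M) = (\<Sum>A\<in>bipartitions N. f A)"
  unfolding purity_total_def
proof (subst Bochner_Integration.integral_sum)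
  fix A assume A: "A \<in> bipartitions N"
  then have "A \<subseteq> {..<N}" by (simp add: bipartitions_def)
  then show "integrable M (\<lambda>x. purity_sum N d A (X x))"
    unfolding purity_sum_def by (simp add: int merge_idx_in_basis_idx)
qed (use integral_purity_sum[OF _ int pattern] per_bipartition in \<open>auto simp: Let_def\<close>)

lemma haar_unitary_integral_purity_total:
  assumes haar: "haar_unitary I \<mu>" and unit: "(\<Sum>x\<in>I. (cmod (\<phi> x))\<^sup>2) = 1"
  shows "(\<integral>U. purity_total (matvec I U \<phi>) \<partial>\<mu>) = complex_of_real
     ((\<Sum>A\<in>bipartitions N. (\<Prod>i\<in>A. real (d i)) + (\<Prod>i\<in>{..<N} - A. real (d i))) / ((\<Prod>i<N. real (d i)) + 1))"
proof -
  interpret unitary_invariant_vector \<mu> I "\<lambda>U. matvec I U \<phi>"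
    by (rule haar_unitary_orbit_invariant[OF haar finite_basis_idx card_I_ge_2 unit])
  have "(\<integral>U. purity_total (matvec I U \<phi>) \<partial>\<mu>) = (\<Sum>A\<in>bipartitions N.
      (of_nat (\<Prod>i\<in>A. d i) + of_nat (\<Prod>i\<in>{..<N} - A. d i)) / (of_nat (\<Prod>i<N. d i) + 1))"
  proof (rule integral_purity_total[OF integrable_quartic])
    show "(\<integral>U. quartic (matvec I U \<phi>) i j k l \<partial>\<mu>) = moment_pattern (2 * pair_moment) pair_moment 0 i j k l"
      if "i \<in> I" "j \<in> I" "k \<in> I" "l \<in> I" for i j k l
      using moment_eq_pattern[OF that] diag_moment_eq cross_moment_eq_0 by (simp add: moment_def)
    fix A assume "A \<in> bipartitions N"
    then have "of_nat (card I) = of_nat (\<Prod>i\<in>A. d i) * (of_nat (\<Prod>i\<in>{..<N} - A. d i) :: complex)"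
      by (simp flip: of_nat_mult add: prod_split_complement card_basis_idx bipartitions_def)
    then show "(let dA = of_nat (\<Prod>i\<in>A. d i); dB = of_nat (\<Prod>i\<in>{..<N} - A. d i)
       in dA * dB * (2 * pair_moment + (dB - 1) * pair_moment) + dA * (dA - 1) * dB * pair_moment)
       = (of_nat (\<Prod>i\<in>A. d i) + of_nat (\<Prod>i\<in>{..<N} - A. d i)) / (of_nat (\<Prod>i<N. d i) + 1)"
      unfolding Let_def card_basis_idx[symmetric]
      by (rule purity_unitary_algebra[OF _ dim_nonzero(1,2) pair_moment_eq])
  qed auto
  then show ?thesis by (simp add: sum_divide_distrib)
qed

lemma haar_orthogonal_integral_purity_total:
  assumes haar: "haar_orthogonal I \<mu>" and unit: "(\<Sum>x\<in>I. (cmod (\<phi> x))\<^sup>2) = 1"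
  defines "D \<equiv> \<Prod>i<N. real (d i)" and "K \<equiv> (2::real) ^ (N - 1) - 1"
    and "C \<equiv> \<Sum>A\<in>bipartitions N. (\<Prod>i\<in>A. real (d i)) + (\<Prod>i\<in>{..<N} - A. real (d i))"
  shows "(\<integral>Q. purity_total (matvec I (of_real_mat I Q) \<phi>) \<partial>\<mu>)
    = complex_of_real ((D * C - 2 * K) / ((D - 1) * (D + 2)))
      + conj_overlap I \<phi> * complex_of_real ((K * (D + 1) - C) / ((D - 1) * (D + 2)))"
proof -
  interpret orth_invariant_vector \<mu> I "\<lambda>Q. matvec I (of_real_mat I Q) \<phi>"
    by (rule haar_orthogonal_orbit_invariant(1)[OF haar finite_basis_idx card_I_ge_2 unit])
  let ?t = "conj_overlap I \<phi>" and ?D = "of_nat (card I) :: complex"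
  have overlap: "?D * (diag_moment + (?D - 1) * cross_moment) = ?t"
    by (rule moment_conj_overlap_const[OF haar_orthogonal_orbit_invariant(2)[OF haar finite_basis_idx card_I_ge_2 unit]])
  have "(\<integral>Q. purity_total (matvec I (of_real_mat I Q) \<phi>) \<partial>\<mu>)
      = (\<Sum>A\<in>bipartitions N. (?t * (?D + 1) - 2 + (?D - ?t) * (of_nat (\<Prod>i\<in>A. d i) + of_nat (\<Prod>i\<in>{..<N} - A. d i)))
          / ((?D - 1) * (?D + 2)))"
  proof (rule integral_purity_total[OF integrable_quartic])
    show "(\<integral>Q. quartic (matvec I (of_real_mat I Q) \<phi>) i j k l \<partial>\<mu>)
        = moment_pattern diag_moment pair_moment cross_moment i j k l"
      if "i \<in> I" "j \<in> I" "k \<in> I" "l \<in> I" for i j k l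
      using moment_eq_pattern[OF that] by (simp add: moment_def)
    fix A assume "A \<in> bipartitions N"
    then have "?D = of_nat (\<Prod>i\<in>A. d i) * of_nat (\<Prod>i\<in>{..<N} - A. d i)"
      by (simp flip: of_nat_mult add: prod_split_complement card_basis_idx bipartitions_def)
    then show "(let dA = of_nat (\<Prod>i\<in>A. d i); dB = of_nat (\<Prod>i\<in>{..<N} - A. d i)
       in dA * dB * (diag_moment + (dB - 1) * pair_moment) + dA * (dA - 1) * dB * pair_moment)
       = (?t * (?D + 1) - 2 + (?D - ?t) * (of_nat (\<Prod>i\<in>A. d i) + of_nat (\<Prod>i\<in>{..<N} - A. d i)))
          / ((?D - 1) * (?D + 2))"
      unfolding Let_def
      by (rule purity_orthogonal_algebra[OF _ dim_nonzero(3,4) diag_moment_eq moment_normalization overlap])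
  qed auto
  also have "\<dots> = (complex_of_real K * (?t * (?D + 1) - 2) + (?D - ?t) * complex_of_real C) / ((?D - 1) * (?D + 2))"
    unfolding sum_affine_divide K_def C_def card_bipartitions_eq[symmetric] by simp
  also have "\<dots> = complex_of_real ((D * C - 2 * K) / ((D - 1) * (D + 2)))
      + ?t * complex_of_real ((K * (D + 1) - C) / ((D - 1) * (D + 2)))"
    unfolding D_def by (simp add: card_basis_idx add_divide_distrib[symmetric] times_divide_eq_right[symmetric] algebra_simps)
  finally show ?thesis .
qed

lemma integral_conj_overlap_product_state:
  "integrable P (\<lambda>\<psi>. conj_overlap I (product_state N \<psi>))"
  "(\<integral>\<psi>. conj_overlap I (product_state N \<psi>) \<partial>P) = (\<Prod>i<N. 2 / (of_nat (d i) + 1))"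
proof -
  text \<open>Outside the sites the factor measures are irrelevant; redefining them there makes the
    whole family a product of probability spaces.\<close>
  define \<sigma>' where "\<sigma>' i = \<sigma> (if i < N then i else 0)" for i
  have P: "P = PiM {..<N} \<sigma>'" by (rule PiM_cong) (auto simp: \<sigma>'_def)
  interpret product_sigma_finite \<sigma>'
    unfolding product_sigma_finite_def \<sigma>'_def
    by (intro allI prob_space_imp_sigma_finite prob_space_factor) (use N_ge_2 in auto)
  have factor: "integrable (\<sigma>' i) (conj_overlap {..<d i})"
    "integral\<^sup>L (\<sigma>' i) (conj_overlap {..<d i}) = 2 / (of_nat (d i) + 1)" if "i \<in> {..<N}" for i
    using uniform_sphere_integral_conj_overlap[OF uniform_sphere_factor d_ge_2] that
    unfolding \<sigma>'_def by auto
  show "integrable P (\<lambda>\<psi>. conj_overlap I (product_state N \<psi>))"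
    unfolding conj_overlap_product_state P by (rule product_integrable_prod) (auto intro: factor)
  show "(\<integral>\<psi>. conj_overlap I (product_state N \<psi>) \<partial>P) = (\<Prod>i<N. 2 / (of_nat (d i) + 1))"
    unfolding conj_overlap_product_state P by (subst product_integral_prod) (auto simp: factor)
qed

lemma haar_unitary_entangling_power:
  assumes haar: "haar_unitary I \<mu>"
  shows "(\<integral>U. entangling_power N d \<sigma> U \<partial>\<mu>) = 2 - 2 / (2 ^ (N - 1) - 1) *
    ((\<Sum>A\<in>bipartitions N. (\<Prod>i\<in>A. real (d i)) + (\<Prod>i\<in>{..<N} - A. real (d i))) / ((\<Prod>i<N. real (d i)) + 1))"
    (is "_ = 2 - _ * ?c")
proof -
  have "(\<integral>U. entangling_power N d \<sigma> U \<partial>\<mu>) = 2 - 2 / (2 ^ (N - 1) - 1) * Re (\<integral>\<psi>. complex_of_real ?c \<partial>P)"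
    by (rule integral_entangling_power[OF haar_unitary_entries[OF haar], where g="\<lambda>_. complex_of_real ?c"])
       (simp_all add: haar_unitary_integral_purity_total[OF haar])
  also have "(\<integral>\<psi>. complex_of_real ?c \<partial>P) = complex_of_real ?c"
    using prob_space_P by (simp add: prob_space.prob_space)
  finally show ?thesis by (simp only: Re_complex_of_real)
qed

lemma haar_orthogonal_entangling_power:
  assumes haar: "haar_orthogonal I \<mu>"
  defines "D \<equiv> \<Prod>i<N. real (d i)" and "K \<equiv> (2::real) ^ (N - 1) - 1"
    and "C \<equiv> \<Sum>A\<in>bipartitions N. (\<Prod>i\<in>A. real (d i)) + (\<Prod>i\<in>{..<N} - A. real (d i))"
  shows "(\<integral>Q. entangling_power N d \<sigma> (\<lambda>x y. complex_of_real (Q x y)) \<partial>\<mu>) = 2 - 2 / K *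
    ((D * C - 2 * K) / ((D - 1) * (D + 2))
      + (\<Prod>i<N. 2 / (real (d i) + 1)) * ((K * (D + 1) - C) / ((D - 1) * (D + 2))))"
proof -
  let ?\<alpha> = "complex_of_real ((D * C - 2 * K) / ((D - 1) * (D + 2)))"
    and ?\<beta> = "complex_of_real ((K * (D + 1) - C) / ((D - 1) * (D + 2)))"
  have "entangling_power N d \<sigma> (\<lambda>x y. complex_of_real (Q x y)) = entangling_power N d \<sigma> (of_real_mat I Q)" for Q
    by (simp only: entangling_power_def matvec_of_real_mat)
  then have "(\<integral>Q. entangling_power N d \<sigma> (\<lambda>x y. complex_of_real (Q x y)) \<partial>\<mu>)
      = (\<integral>Q. entangling_power N d \<sigma> (of_real_mat I Q) \<partial>\<mu>)"
    by simp
  also have "\<dots> = 2 - 2 / (2 ^ (N - 1) - 1) * Re (\<integral>\<psi>. ?\<alpha> + conj_overlap I (product_state N \<psi>) * ?\<beta> \<partial>P)"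
  proof (rule integral_entangling_power[OF haar_orthogonal_entries[OF haar],
        where g="\<lambda>\<phi>. ?\<alpha> + conj_overlap I \<phi> * ?\<beta>"])
    show "(\<lambda>\<psi>. ?\<alpha> + conj_overlap I (product_state N \<psi>) * ?\<beta>) \<in> borel_measurable P"
      using borel_measurable_integrable[OF integral_conj_overlap_product_state(1)] by measurable
  qed (assumption | unfold D_def K_def C_def, erule haar_orthogonal_integral_purity_total[OF haar])+
  also have "(\<integral>\<psi>. ?\<alpha> + conj_overlap I (product_state N \<psi>) * ?\<beta> \<partial>P)
      = ?\<alpha> + (\<Prod>i<N. 2 / (of_nat (d i) + 1)) * ?\<beta>"
  proof -
    interpret prob_space P by (rule prob_space_P)
    show ?thesis using integral_conj_overlap_product_state by (simp add: prob_space)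
  qed
  also have "\<dots> = complex_of_real ((D * C - 2 * K) / ((D - 1) * (D + 2))
      + (\<Prod>i<N. 2 / (real (d i) + 1)) * ((K * (D + 1) - C) / ((D - 1) * (D + 2))))"
    by simp
  finally show ?thesis by (simp only: Re_complex_of_real flip: K_def)
qed

end

lemma entangling_power_unitary_algebra:
  fixes K D C B :: real
  assumes "K \<noteq> 0" "D + 1 \<noteq> 0" "B \<noteq> 0"
  shows "2 - 2 / K * (C / (D + 1)) = 2 * (1 - 1 / B * (B * C / (K * (D + 1))))"
  using assms by (simp add: field_simps)

lemma entangling_power_orthogonal_algebra:
  fixes K D C B z r :: real
  assumes "K \<noteq> 0" "r \<noteq> 0" "B \<noteq> 0"
  shows "2 - 2 / K * ((D * C - 2 * K) / r + z / B * ((K * (D + 1) - C) / r))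
    = 2 * (1 - 1 / B * ((z * (D + 1) - 2 * B + (B * D - z) / K * C) / r))"
  using assms by (simp add: field_simps)

theorem mainTheorem10:
  fixes N :: nat and d :: "nat \<Rightarrow> nat"
    and \<sigma> :: "nat \<Rightarrow> (nat \<Rightarrow> complex) measure"
    and \<mu>U :: "((nat \<Rightarrow> nat) \<Rightarrow> (nat \<Rightarrow> nat) \<Rightarrow> complex) measure"
    and \<mu>O :: "((nat \<Rightarrow> nat) \<Rightarrow> (nat \<Rightarrow> nat) \<Rightarrow> real) measure"
  assumes "N \<ge> 2"
    and "\<forall>i<N. d i \<ge> 2"
    and "\<forall>i<N. uniform_sphere {..<d i} (\<sigma> i)"
    and "haar_unitary (basis_idx N d) \<mu>U"
    and "haar_orthogonal (basis_idx N d) \<mu>O"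
  defines "D \<equiv> (\<Prod>i<N. real (d i))"
    and "B \<equiv> (\<Sum>s\<in>PiE {..<N} (\<lambda>_. {0::nat, 1}). \<Prod>i<N. real (d i) ^ s i)"
    and "C \<equiv> (\<Sum>A\<in>bipartitions N. (\<Prod>i\<in>A. real (d i)) + (\<Prod>i\<in>{..<N} - A. real (d i)))"
  shows "((\<integral>Q. entangling_power N d \<sigma> (\<lambda>x y. complex_of_real (Q x y)) \<partial>\<mu>O) =
           2 * (1 - (\<Prod>i<N. 1 / (real (d i) + 1)) *
             ((2 ^ N * (D + 1) - 2 * B + (B * D - 2 ^ N) / (2 ^ (N - 1) - 1) * C)
              / ((D - 1) * (D + 2))))) \<and>
         ((\<integral>U. entangling_power N d \<sigma> U \<partial>\<mu>U) =
           2 * (1 - (\<Prod>i<N. 1 / (real (d i) + 1)) *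
             (B * C / ((2 ^ (N - 1) - 1) * (D + 1)))))"
proof -
  interpret multipartite N d \<sigma> using assms(1-3) by unfold_locales auto
  have B: "B = (\<Prod>i<N. 1 + real (d i))" unfolding B_def by (rule sum_power_01) simp
  then have B_nz: "B \<noteq> 0" by (simp add: add_pos_nonneg prod_pos)
  have inv_B: "(\<Prod>i<N. 1 / (real (d i) + 1)) = 1 / B" and E: "(\<Prod>i<N. 2 / (real (d i) + 1)) = 2 ^ N / B"
    unfolding B by (simp_all add: prod_dividef add.commute)
  have "D \<ge> 2" using prod_d_ge_2 unfolding D_def by (simp flip: of_nat_prod)
  then have den: "(D - 1) * (D + 2) \<noteq> 0" by simp
  have K: "(2::real) ^ (N - 1) - 1 \<noteq> 0" using bipartition_count_pos by simp
  have D1: "D + 1 \<noteq> 0" using \<open>D \<ge> 2\<close> by simp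
  have O: "(\<integral>Q. entangling_power N d \<sigma> (\<lambda>x y. complex_of_real (Q x y)) \<partial>\<mu>O) = 2 - 2 / (2 ^ (N - 1) - 1) *
      ((D * C - 2 * (2 ^ (N - 1) - 1)) / ((D - 1) * (D + 2))
       + 2 ^ N / B * (((2 ^ (N - 1) - 1) * (D + 1) - C) / ((D - 1) * (D + 2))))"
    using haar_orthogonal_entangling_power[OF assms(5), folded D_def C_def] unfolding E .
  have U: "(\<integral>U. entangling_power N d \<sigma> U \<partial>\<mu>U) = 2 - 2 / (2 ^ (N - 1) - 1) * (C / (D + 1))"
    using haar_unitary_entangling_power[OF assms(4), folded D_def C_def] .
  show ?thesis
    unfolding inv_B O U entangling_power_orthogonal_algebra[OF K den B_nz]
      entangling_power_unitary_algebra[OF K D1 B_nz] by (rule conjI refl)+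
qed

end
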